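(* Consider three unit point masses in $\mathbb{R}^2$ with positions $q_i=(x_i,z_i)$, configuration space $Q=\{q=(q_1,q_2,q_3)\in\mathbb{R}^6: q_i\neq q_j\ (i\neq j)\}$, and total potential energy $$U(q)=\frac{\kappa_s}{2}\sum_{k=1}^3(\ell_k-\bar\ell_k)^2+\kappa_{\mathrm{np}}\sum_{i=1}^3\chi(z_i)+\sum_{i=1}^3 z_i,$$ where $\ell_k=\|q_i-q_j\|$ for $\{i,j,k\}=\{1,2,3\}$ and $\chi(s)=\tfrac12 s^2$ for $s<0$, $\chi(s)=0$ for $s\ge 0$. $U$ is invariant under the translations $x_i\mapsto x_i+g$ ($g\in\mathbb{R}$), so $U=\hat U\circ\pi$ for a reduced potential $\hat U$ on $Q/\mathbb{R}$. Assume that the rest lengths $\bar\ell_1,\bar\ell_2,\bar\ell_3>0$ form a non-degenerate triangle and that $\kappa_s,\kappa_{\mathrm{np}}>0$ are sufficiently large. Then there exists a local minimum $\hat q_*\in Q/\mathbb{R}$ of $\hat U$ that is non-degenerate, i.e. the Hessian of $\hat U$ at $\hat q_*$ is positive definite.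
   Context: Following the paper, $\chi$ may be tacitly replaced by a smooth function agreeing with it outside an arbitrarily small neighborhood of $0$. $Q/\mathbb{R}$ is the quotient of $Q$ by the free proper action $(x_1,z_1,x_2,z_2,x_3,z_3)\mapsto(x_1+g,z_1,x_2+g,z_2,x_3+g,z_3)$ of $(\mathbb{R},+)$. *)

theory Defs
  imports "HOL-Analysis.Analysis"
begin

type_synonym point = "real \<times> real"   (* q_i = (x_i, z_i) *)
type_synonym config = "point \<times> point \<times> point"
(* coordinates of Q/R via the global slice x_1 = 0: (z_1, x_2, z_2, x_3, z_3) *)
type_synonym rconfig = "real \<times> real \<times> real \<times> real \<times> real"

definition chi :: "real \<Rightarrow> real" where
  "chi s = (if s < 0 then s\<^sup>2 / 2 else 0)"

definition config_space :: "config set" where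
  "config_space = {(q1, q2, q3). q1 \<noteq> q2 \<and> q1 \<noteq> q3 \<and> q2 \<noteq> q3}"

(* total potential energy; l1 l2 l3 are the rest lengths,
   l_k = |q_i - q_j| with {i,j,k} = {1,2,3} *)
definition U :: "real \<Rightarrow> real \<Rightarrow> real \<Rightarrow> real \<Rightarrow> real \<Rightarrow> config \<Rightarrow> real" where
  "U ks knp l1 l2 l3 q = (case q of (q1, q2, q3) \<Rightarrow>
      ks / 2 * ((dist q2 q3 - l1)\<^sup>2 + (dist q1 q3 - l2)\<^sup>2 + (dist q1 q2 - l3)\<^sup>2)
      + knp * (chi (snd q1) + chi (snd q2) + chi (snd q3))
      + (snd q1 + snd q2 + snd q3))"

definition sect :: "rconfig \<Rightarrow> config" where
  "sect y = (case y of (z1, x2, z2, x3, z3) \<Rightarrow> ((0, z1), (x2, z2), (x3, z3)))"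

definition rconfig_space :: "rconfig set" where
  "rconfig_space = {y. sect y \<in> config_space}"

definition Uhat :: "real \<Rightarrow> real \<Rightarrow> real \<Rightarrow> real \<Rightarrow> real \<Rightarrow> rconfig \<Rightarrow> real" where
  "Uhat ks knp l1 l2 l3 y = U ks knp l1 l2 l3 (sect y)"

definition nondeg_local_min :: "('a::euclidean_space \<Rightarrow> real) \<Rightarrow> 'a set \<Rightarrow> 'a \<Rightarrow> bool" where
  "nondeg_local_min f S p \<longleftrightarrow>
     (\<exists>e>0. ball p e \<subseteq> S \<and> (\<forall>y\<in>ball p e. f p \<le> f y) \<and>
       (\<exists>Df H. (\<forall>y\<in>ball p e. (f has_derivative Df y) (at y)) \<and>
              (\<forall>h. ((\<lambda>y. Df y h) has_derivative H h) (at p)) \<and>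
              (\<forall>h. h \<noteq> 0 \<longrightarrow> H h h > 0)))"

end

theory Submission
  imports Defs
begin

text \<open>For stiff springs and ground the minimum is a small perturbation of the rest triangle
  standing on its longest side \<open>q\<^sub>1q\<^sub>2\<close>. Candidate equilibria are parametrised by the forces \<open>w\<close>
  (spring tensions and ground reactions) and the compliances \<open>e = (1/\<kappa>\<^sub>s, 1/\<kappa>\<^sub>n\<^sub>p)\<close>: these
  determine a configuration, whose equilibrium conditions determine the forces again. Near
  \<open>e = 0\<close> this map is uniformly close to the constant forces of the rigid triangle, so Brouwer's
  theorem gives a fixed point, which is a critical point of \<open>\<hat>U\<close> in the region
  \<open>z\<^sub>1, z\<^sub>2 < 0 < z\<^sub>3\<close> where \<open>\<hat>U\<close> is smooth. There the Hessian is \<open>\<kappa>\<^sub>s A + \<kappa>\<^sub>n\<^sub>p B + E\<close>, with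
  \<open>A + B\<close> positive definite and \<open>E\<close> bounded uniformly on a compact set of parameters, so it is
  positive definite for large stiffnesses, and a critical point with positive definite Hessian is
  a non-degenerate local minimum. Other orders of the side lengths reduce to this case by
  relabelling the masses cyclically.\<close>

section \<open>Local minima from positive definite second derivatives\<close>

lemma has_real_derivative_along_line:
  fixes F :: "'a::real_normed_vector \<Rightarrow> real"
  assumes "(F has_derivative F') (at (p + t *\<^sub>R v))"
  shows "((\<lambda>t. F (p + t *\<^sub>R v)) has_real_derivative F' v) (at t)"
proof -
  have "((\<lambda>t. p + t *\<^sub>R v) has_derivative (\<lambda>s. s *\<^sub>R v)) (at t)"
    by (rule derivative_eq_intros refl)+ simp
  from has_derivative_compose[OF this assms]
  have "((\<lambda>t. F (p + t *\<^sub>R v)) has_derivative (\<lambda>s. F' (s *\<^sub>R v))) (at t)" .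
  moreover have "linear F'"
    using assms by (rule has_derivative_linear)
  then have "(\<lambda>s. F' (s *\<^sub>R v)) = (*) (F' v)"
    by (auto simp: fun_eq_iff linear.scaleR)
  ultimately show ?thesis
    unfolding has_field_derivative_def by simp
qed

lemma critical_point_min_on_ball:
  fixes f :: "'a::real_normed_vector \<Rightarrow> real"
  assumes fD: "\<And>y. y \<in> ball p e \<Longrightarrow> (f has_derivative Df y) (at y)"
    and DH: "\<And>y h. y \<in> ball p e \<Longrightarrow> ((\<lambda>y. Df y h) has_derivative H y h) (at y)"
    and crit: "\<And>h. Df p h = 0"
    and psd: "\<And>y h. y \<in> ball p e \<Longrightarrow> H y h h \<ge> 0"
    and y: "y \<in> ball p e"
  shows "f p \<le> f y"
proof -
  define v where "v = y - p"
  have line: "p + t *\<^sub>R v \<in> ball p e" if "0 \<le> t" "t \<le> 1" for t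
  proof -
    have "norm (t *\<^sub>R v) \<le> norm v"
      using that by (simp add: mult_left_le_one_le)
    then show ?thesis
      using y by (simp add: dist_norm v_def norm_minus_commute)
  qed
  have slope_nonneg: "Df (p + t *\<^sub>R v) v \<ge> 0" if "0 \<le> t" "t \<le> 1" for t
  proof -
    have "Df (p + 0 *\<^sub>R v) v \<le> Df (p + t *\<^sub>R v) v"
    proof (rule DERIV_nonneg_imp_nondecreasing[OF that(1)])
      fix s
      assume "0 \<le> s" "s \<le> t"
      then have s: "p + s *\<^sub>R v \<in> ball p e"
        using that line by auto
      show "\<exists>d. ((\<lambda>s. Df (p + s *\<^sub>R v) v) has_real_derivative d) (at s) \<and> d \<ge> 0"
        by (intro exI[of _ "H (p + s *\<^sub>R v) v v"] conjI has_real_derivative_along_line DH[OF s] psd[OF s])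
    qed
    then show ?thesis
      using crit by simp
  qed
  have "f (p + 0 *\<^sub>R v) \<le> f (p + 1 *\<^sub>R v)"
  proof (rule DERIV_nonneg_imp_nondecreasing[of 0 1])
    fix s :: real
    assume "0 \<le> s" "s \<le> 1"
    then show "\<exists>d. ((\<lambda>s. f (p + s *\<^sub>R v)) has_real_derivative d) (at s) \<and> d \<ge> 0"
      by (intro exI[of _ "Df (p + s *\<^sub>R v) v"] conjI has_real_derivative_along_line fD line
          slope_nonneg)
  qed simp
  then show ?thesis
    by (simp add: v_def)
qed

lemma continuous_positive_near:
  fixes G :: "'a::metric_space \<Rightarrow> 'b::metric_space \<Rightarrow> real"
  assumes K: "compact K" "K \<noteq> {}" and C: "compact C" and p: "p \<in> C"
    and cont: "continuous_on (C \<times> K) (\<lambda>z. G (fst z) (snd z))"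
    and pos: "\<And>h. h \<in> K \<Longrightarrow> G p h > 0"
  shows "\<exists>d>0. \<forall>y\<in>C. dist y p < d \<longrightarrow> (\<forall>h\<in>K. G y h > 0)"
proof -
  have "continuous_on K (G p)"
    by (rule continuous_on_compose2[OF cont, of K "\<lambda>h. (p,h)", simplified])
       (auto intro!: continuous_intros simp: p)
  then obtain h0 where h0: "h0 \<in> K" "\<forall>h\<in>K. G p h0 \<le> G p h"
    using continuous_attains_inf[OF K] by auto
  define c where "c = G p h0"
  have c: "c > 0"
    using pos h0 by (simp add: c_def)
  have "uniformly_continuous_on (C \<times> K) (\<lambda>z. G (fst z) (snd z))"
    by (rule compact_uniformly_continuous[OF cont compact_Times[OF C K(1)]])
  then obtain d where d: "d > 0" "\<forall>x\<in>C \<times> K. \<forall>x'\<in>C \<times> K. dist x' x < d \<longrightarrow>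
       dist (G (fst x') (snd x')) (G (fst x) (snd x)) < c"
    using c unfolding uniformly_continuous_on_def by metis
  show ?thesis
  proof (intro exI[of _ d] conjI d ballI impI)
    fix y h
    assume y: "y \<in> C" "dist y p < d" and h: "h \<in> K"
    have "dist (y, h) (p, h) < d"
      using y by (simp add: dist_Pair_Pair)
    then have "dist (G y h) (G p h) < c"
      using d(2) y h p by force
    moreover have "G p h \<ge> c"
      using h0 h by (simp add: c_def)
    ultimately show "G y h > 0"
      by (auto simp: dist_real_def)
  qed
qed

lemma positive_definite_near:
  fixes H :: "'a::euclidean_space \<Rightarrow> 'a \<Rightarrow> 'a \<Rightarrow> real"
  assumes W: "open W" "p \<in> W"
    and cont: "continuous_on (W \<times> sphere 0 1) (\<lambda>z. H (fst z) (snd z) (snd z))"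
    and hom: "\<And>y h c. y \<in> W \<Longrightarrow> H y (c *\<^sub>R h) (c *\<^sub>R h) = c\<^sup>2 * H y h h"
    and pd: "\<And>h. h \<noteq> 0 \<Longrightarrow> H p h h > 0"
  shows "\<exists>e>0. ball p e \<subseteq> W \<and> (\<forall>y\<in>ball p e. \<forall>h. h \<noteq> 0 \<longrightarrow> H y h h > 0)"
proof -
  obtain r where r: "r > 0" "cball p r \<subseteq> W"
    using open_contains_cball W by blast
  have "\<exists>d>0. \<forall>y\<in>cball p r. dist y p < d \<longrightarrow> (\<forall>h\<in>sphere 0 1. H y h h > 0)"
    using r pd
    by (intro continuous_positive_near[where G = "\<lambda>y h. H y h h"] continuous_on_subset[OF cont])
       (auto simp: less_imp_le intro!: pd)
  then obtain d where d: "d > 0"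
    "\<And>y h. y \<in> cball p r \<Longrightarrow> dist y p < d \<Longrightarrow> h \<in> sphere 0 1 \<Longrightarrow> H y h h > 0"
    by blast
  show ?thesis
  proof (intro exI[of _ "min d r"] conjI ballI allI impI)
    show "min d r > 0" "ball p (min d r) \<subseteq> W"
      using d r by auto
    fix y h :: 'a
    assume y: "y \<in> ball p (min d r)" and h: "h \<noteq> 0"
    then have "H y (h /\<^sub>R norm h) (h /\<^sub>R norm h) > 0"
      by (intro d(2)) (auto simp: dist_commute)
    moreover have "y \<in> W"
      using y r by (auto simp: dist_commute)
    then have "H y h h = (norm h)\<^sup>2 * H y (h /\<^sub>R norm h) (h /\<^sub>R norm h)"
      using hom[of y "norm h" "h /\<^sub>R norm h"] h by simp
    ultimately show "H y h h > 0"
      using h by simp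
  qed
qed

lemma nondeg_local_minI:
  fixes f :: "'a::euclidean_space \<Rightarrow> real"
  assumes W: "open W" "p \<in> W" "W \<subseteq> S"
    and fD: "\<And>y. y \<in> W \<Longrightarrow> (f has_derivative Df y) (at y)"
    and DH: "\<And>y h. y \<in> W \<Longrightarrow> ((\<lambda>y. Df y h) has_derivative H y h) (at y)"
    and crit: "\<And>h. Df p h = 0"
    and cont: "continuous_on (W \<times> sphere 0 1) (\<lambda>z. H (fst z) (snd z) (snd z))"
    and hom: "\<And>y h c. y \<in> W \<Longrightarrow> H y (c *\<^sub>R h) (c *\<^sub>R h) = c\<^sup>2 * H y h h"
    and pd: "\<And>h. h \<noteq> 0 \<Longrightarrow> H p h h > 0"
  shows "nondeg_local_min f S p"
proof -
  obtain e where e: "e > 0" "ball p e \<subseteq> W" and pd_near: "\<forall>y\<in>ball p e. \<forall>h. h \<noteq> 0 \<longrightarrow> H y h h > 0"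
    using positive_definite_near[where H = H, OF W(1,2) cont hom pd] by blast
  have psd: "H y h h \<ge> 0" if y: "y \<in> ball p e" for y h
  proof (cases "h = 0")
    case True
    have "H y 0 0 = 0"
      using hom[of y 0 0] e(2) y by auto
    then show ?thesis
      using True by simp
  next
    case False
    then show ?thesis
      using pd_near y by (simp add: less_imp_le)
  qed
  have "f p \<le> f y" if "y \<in> ball p e" for y
    using e(2) that by (intro critical_point_min_on_ball[of p e f Df H] fD DH crit psd) auto
  then show ?thesis
    unfolding nondeg_local_min_def using e W(3) fD DH pd W(2) by blast
qed

section \<open>Springs and the potential in contact position\<close>

definition vlen :: "('a \<Rightarrow> real) \<Rightarrow> ('a \<Rightarrow> real) \<Rightarrow> 'a \<Rightarrow> real" where
  "vlen a b y = sqrt ((a y)\<^sup>2 + (b y)\<^sup>2)"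

definition spring_deriv :: "real \<Rightarrow> real \<Rightarrow> ('a \<Rightarrow> real) \<Rightarrow> ('a \<Rightarrow> real) \<Rightarrow> 'a \<Rightarrow> 'a \<Rightarrow> real" where
  "spring_deriv k L a b y h = k * (vlen a b y - L) / vlen a b y * (a y * a h + b y * b h)"

definition spring_hessian ::
    "real \<Rightarrow> real \<Rightarrow> ('a \<Rightarrow> real) \<Rightarrow> ('a \<Rightarrow> real) \<Rightarrow> 'a \<Rightarrow> 'a \<Rightarrow> 'a \<Rightarrow> real" where
  "spring_hessian k L a b y h m = k * ((1 - L / vlen a b y) * (a h * a m + b h * b m)
     + L / vlen a b y ^ 3 * (a y * a h + b y * b h) * (a y * a m + b y * b m))"

lemma spring_energy_has_derivative:
  fixes a b :: "'a::real_normed_vector \<Rightarrow> real"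
  assumes la: "bounded_linear a" and lb: "bounded_linear b" and pos: "(a y)\<^sup>2 + (b y)\<^sup>2 > 0"
  shows "((\<lambda>y. k / 2 * (vlen a b y - L)\<^sup>2) has_derivative spring_deriv k L a b y) (at y)"
proof -
  have da: "(a has_derivative a) (at y)" and db: "(b has_derivative b) (at y)"
    using la lb by (auto intro: bounded_linear_imp_has_derivative)
  have sp: "sqrt ((a y)\<^sup>2 + (b y)\<^sup>2) > 0"
    using pos by simp
  have "((\<lambda>y. k / 2 * (sqrt ((a y)\<^sup>2 + (b y)\<^sup>2) - L)\<^sup>2) has_derivative
      (\<lambda>h. k * (sqrt ((a y)\<^sup>2 + (b y)\<^sup>2) - L) / sqrt ((a y)\<^sup>2 + (b y)\<^sup>2) * (a y * a h + b y * b h)))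
      (at y)"
    by (rule derivative_eq_intros da db pos | simp)+
       (use sp in \<open>auto simp: fun_eq_iff divide_simps power2_eq_square\<close>)
  then show ?thesis
    unfolding vlen_def spring_deriv_def[abs_def] .
qed

lemma spring_deriv_has_derivative:
  fixes a b :: "'a::real_normed_vector \<Rightarrow> real"
  assumes la: "bounded_linear a" and lb: "bounded_linear b" and pos: "(a y)\<^sup>2 + (b y)\<^sup>2 > 0"
  shows "((\<lambda>y. spring_deriv k L a b y h) has_derivative spring_hessian k L a b y h) (at y)"
proof -
  have da: "(a has_derivative a) (at y)" and db: "(b has_derivative b) (at y)"
    using la lb by (auto intro: bounded_linear_imp_has_derivative)
  define N where "N = vlen a b y"
  have N: "N > 0"
    using pos by (simp add: N_def vlen_def)
  have dN: "(vlen a b has_derivative (\<lambda>m. (a y * a m + b y * b m) / N)) (at y)"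
    unfolding N_def vlen_def[abs_def]
    by (rule derivative_eq_intros da db pos refl)+
       (use N in \<open>auto simp: N_def vlen_def fun_eq_iff divide_simps power2_eq_square\<close>)
  have "((\<lambda>y. k * (vlen a b y - L) / vlen a b y) has_derivative
      (\<lambda>m. k * L * (a y * a m + b y * b m) / N ^ 3)) (at y)"
    by (rule has_derivative_eq_rhs, (rule dN | rule derivative_intros)+)
       (use N in \<open>auto simp: N_def[symmetric] fun_eq_iff divide_simps power3_eq_cube,
         simp add: algebra_simps\<close>)
  moreover have "((\<lambda>y. a y * a h + b y * b h) has_derivative (\<lambda>m. a m * a h + b m * b h)) (at y)"
    by (rule derivative_eq_intros da db refl)+ simp
  ultimately show ?thesis
    unfolding spring_deriv_def spring_hessian_def[abs_def] N_def[symmetric]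
    by (rule has_derivative_eq_rhs[OF has_derivative_mult])
       (use N in \<open>auto simp: N_def[symmetric] fun_eq_iff divide_simps power3_eq_cube,
         simp add: algebra_simps\<close>)
qed

lemma spring_hessian_scaleR:
  assumes "linear a" "linear b"
  shows "spring_hessian k L a b y (r *\<^sub>R h) (r *\<^sub>R h) = r\<^sup>2 * spring_hessian k L a b y h h"
proof -
  define A B where "A = 1 - L / vlen a b y" and "B = L / vlen a b y ^ 3"
  have "spring_hessian k L a b y h m
      = k * (A * (a h * a m + b h * b m) + B * (a y * a h + b y * b h) * (a y * a m + b y * b m))"
    for h m by (simp add: spring_hessian_def A_def B_def)
  moreover have "a (r *\<^sub>R h) = r * a h" "b (r *\<^sub>R h) = r * b h"
    using assms by (simp_all add: linear_scale)
  ultimately show ?thesis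
    by (simp only:) (simp add: algebra_simps power2_eq_square)
qed

text \<open>\<open>d\<^sub>i\<^sub>jx y\<close> and \<open>d\<^sub>i\<^sub>jz y\<close> are the components of the edge vector \<open>q\<^sub>j - q\<^sub>i\<close> of the
  configuration \<open>sect y\<close>.\<close>

definition coord1 :: "rconfig \<Rightarrow> real" where "coord1 y = fst y"
definition coord2 :: "rconfig \<Rightarrow> real" where "coord2 y = fst (snd y)"
definition coord3 :: "rconfig \<Rightarrow> real" where "coord3 y = fst (snd (snd y))"
definition coord4 :: "rconfig \<Rightarrow> real" where "coord4 y = fst (snd (snd (snd y)))"
definition coord5 :: "rconfig \<Rightarrow> real" where "coord5 y = snd (snd (snd (snd y)))"

lemmas coord_defs = coord1_def coord2_def coord3_def coord4_def coord5_def

lemma coord_simps [simp]: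
  "coord1 (a, b, c, d, e) = a" "coord2 (a, b, c, d, e) = b" "coord3 (a, b, c, d, e) = c"
  "coord4 (a, b, c, d, e) = d" "coord5 (a, b, c, d, e) = e"
  by (simp_all add: coord_defs)

definition d12x :: "rconfig \<Rightarrow> real" where "d12x y = coord2 y"
definition d12z :: "rconfig \<Rightarrow> real" where "d12z y = coord3 y - coord1 y"
definition d13x :: "rconfig \<Rightarrow> real" where "d13x y = coord4 y"
definition d13z :: "rconfig \<Rightarrow> real" where "d13z y = coord5 y - coord1 y"
definition d23x :: "rconfig \<Rightarrow> real" where "d23x y = coord4 y - coord2 y"
definition d23z :: "rconfig \<Rightarrow> real" where "d23z y = coord5 y - coord3 y"

lemmas edge_defs = d12x_def d12z_def d13x_def d13z_def d23x_def d23z_def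

lemma bounded_linear_coord:
  "bounded_linear coord1" "bounded_linear coord2" "bounded_linear coord3"
  "bounded_linear coord4" "bounded_linear coord5"
  unfolding coord_defs
  by (auto intro!: bounded_linear_compose[OF bounded_linear_fst]
      bounded_linear_compose[OF bounded_linear_snd] bounded_linear_fst bounded_linear_snd)

lemma bounded_linear_edge:
  "bounded_linear d12x" "bounded_linear d12z" "bounded_linear d13x"
  "bounded_linear d13z" "bounded_linear d23x" "bounded_linear d23z"
  unfolding edge_defs[abs_def] using bounded_linear_coord by (auto intro!: bounded_linear_sub)

lemma continuous_on_coord_edge [continuous_intros]:
  assumes "continuous_on S f"
  shows "continuous_on S (\<lambda>x. coord1 (f x))" "continuous_on S (\<lambda>x. coord2 (f x))"
    "continuous_on S (\<lambda>x. coord3 (f x))" "continuous_on S (\<lambda>x. coord4 (f x))"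
    "continuous_on S (\<lambda>x. coord5 (f x))"
    "continuous_on S (\<lambda>x. d12x (f x))" "continuous_on S (\<lambda>x. d12z (f x))"
    "continuous_on S (\<lambda>x. d13x (f x))" "continuous_on S (\<lambda>x. d13z (f x))"
    "continuous_on S (\<lambda>x. d23x (f x))" "continuous_on S (\<lambda>x. d23z (f x))"
  unfolding edge_defs coord_defs using assms by (auto intro!: continuous_intros)

lemma coord_scaleR:
  "coord1 (r *\<^sub>R h) = r * coord1 h" "coord2 (r *\<^sub>R h) = r * coord2 h"
  "coord3 (r *\<^sub>R h) = r * coord3 h" "coord4 (r *\<^sub>R h) = r * coord4 h"
  "coord5 (r *\<^sub>R h) = r * coord5 h"
  by (simp_all add: coord_defs)

lemma abs_coord_le_norm:
  "\<bar>coord1 y\<bar> \<le> norm y" "\<bar>coord2 y\<bar> \<le> norm y" "\<bar>coord3 y\<bar> \<le> norm y"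
  "\<bar>coord4 y\<bar> \<le> norm y" "\<bar>coord5 y\<bar> \<le> norm y"
proof -
  obtain a b c d e where y: "y = (a, b, c, d, e)"
    by (cases y) auto
  have "norm y = sqrt (a\<^sup>2 + (b\<^sup>2 + (c\<^sup>2 + (d\<^sup>2 + e\<^sup>2))))"
    unfolding y by (simp add: norm_Pair)
  then show "\<bar>coord1 y\<bar> \<le> norm y" "\<bar>coord2 y\<bar> \<le> norm y" "\<bar>coord3 y\<bar> \<le> norm y"
    "\<bar>coord4 y\<bar> \<le> norm y" "\<bar>coord5 y\<bar> \<le> norm y"
    by (simp_all add: y real_le_rsqrt)
qed

text \<open>Where \<open>z\<^sub>1, z\<^sub>2 < 0 < z\<^sub>3\<close> the reduced potential agrees with the following smooth function.\<close>

definition U_contact :: "real \<Rightarrow> real \<Rightarrow> real \<Rightarrow> real \<Rightarrow> real \<Rightarrow> rconfig \<Rightarrow> real" where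
  "U_contact ks knp l1 l2 l3 y =
     ks / 2 * (vlen d23x d23z y - l1)\<^sup>2 + ks / 2 * (vlen d13x d13z y - l2)\<^sup>2
     + ks / 2 * (vlen d12x d12z y - l3)\<^sup>2
     + (knp * ((coord1 y)\<^sup>2 / 2 + (coord3 y)\<^sup>2 / 2) + (coord1 y + coord3 y + coord5 y))"

definition DU_contact :: "real \<Rightarrow> real \<Rightarrow> real \<Rightarrow> real \<Rightarrow> real \<Rightarrow> rconfig \<Rightarrow> rconfig \<Rightarrow> real" where
  "DU_contact ks knp l1 l2 l3 y h =
     spring_deriv ks l1 d23x d23z y h + spring_deriv ks l2 d13x d13z y h
     + spring_deriv ks l3 d12x d12z y h
     + (knp * (coord1 y * coord1 h + coord3 y * coord3 h) + (coord1 h + coord3 h + coord5 h))"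

definition HU_contact ::
    "real \<Rightarrow> real \<Rightarrow> real \<Rightarrow> real \<Rightarrow> real \<Rightarrow> rconfig \<Rightarrow> rconfig \<Rightarrow> rconfig \<Rightarrow> real" where
  "HU_contact ks knp l1 l2 l3 y h m =
     spring_hessian ks l1 d23x d23z y h m + spring_hessian ks l2 d13x d13z y h m
     + spring_hessian ks l3 d12x d12z y h m + knp * (coord1 h * coord1 m + coord3 h * coord3 m)"

definition separated :: "rconfig set" where
  "separated = {y. 0 < (d12x y)\<^sup>2 + (d12z y)\<^sup>2 \<and> 0 < (d13x y)\<^sup>2 + (d13z y)\<^sup>2
     \<and> 0 < (d23x y)\<^sup>2 + (d23z y)\<^sup>2}"

definition contact_set :: "rconfig set" where
  "contact_set = separated \<inter> {y. coord1 y < 0 \<and> coord3 y < 0 \<and> 0 < coord5 y}"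

lemma U_contact_has_derivative:
  assumes "y \<in> separated"
  shows "(U_contact ks knp l1 l2 l3 has_derivative DU_contact ks knp l1 l2 l3 y) (at y)"
proof -
  have p: "0 < (d12x y)\<^sup>2 + (d12z y)\<^sup>2" "0 < (d13x y)\<^sup>2 + (d13z y)\<^sup>2" "0 < (d23x y)\<^sup>2 + (d23z y)\<^sup>2"
    using assms by (auto simp: separated_def)
  have "((\<lambda>y. knp * ((coord1 y)\<^sup>2 / 2 + (coord3 y)\<^sup>2 / 2) + (coord1 y + coord3 y + coord5 y))
      has_derivative (\<lambda>h. knp * (coord1 y * coord1 h + coord3 y * coord3 h)
        + (coord1 h + coord3 h + coord5 h))) (at y)"
    by (rule has_derivative_eq_rhs,
        (rule derivative_intros bounded_linear_coord[THEN bounded_linear_imp_has_derivative] | simp)+)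
       (simp add: fun_eq_iff algebra_simps power2_eq_square)
  then show ?thesis
    unfolding U_contact_def[abs_def] DU_contact_def[abs_def]
    by (intro has_derivative_add[OF has_derivative_add[OF has_derivative_add]]
        spring_energy_has_derivative bounded_linear_edge p)
qed

lemma DU_contact_has_derivative:
  assumes "y \<in> separated"
  shows "((\<lambda>y. DU_contact ks knp l1 l2 l3 y h) has_derivative HU_contact ks knp l1 l2 l3 y h) (at y)"
proof -
  have p: "0 < (d12x y)\<^sup>2 + (d12z y)\<^sup>2" "0 < (d13x y)\<^sup>2 + (d13z y)\<^sup>2" "0 < (d23x y)\<^sup>2 + (d23z y)\<^sup>2"
    using assms by (auto simp: separated_def)
  have "((\<lambda>y. knp * (coord1 y * coord1 h + coord3 y * coord3 h) + (coord1 h + coord3 h + coord5 h))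
      has_derivative (\<lambda>m. knp * (coord1 h * coord1 m + coord3 h * coord3 m))) (at y)"
    by (rule has_derivative_eq_rhs,
        (rule derivative_intros bounded_linear_coord[THEN bounded_linear_imp_has_derivative] | simp)+)
       (simp add: fun_eq_iff algebra_simps)
  then show ?thesis
    unfolding HU_contact_def[abs_def] DU_contact_def
    by (intro has_derivative_add[OF has_derivative_add[OF has_derivative_add]]
        spring_deriv_has_derivative bounded_linear_edge p)
qed

lemma HU_contact_scaleR:
  "HU_contact ks knp l1 l2 l3 y (r *\<^sub>R h) (r *\<^sub>R h) = r\<^sup>2 * HU_contact ks knp l1 l2 l3 y h h"
  unfolding HU_contact_def coord_scaleR
  by (simp add: spring_hessian_scaleR bounded_linear_edge bounded_linear.linear algebra_simps
      power2_eq_square)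

lemma continuous_on_HU_contact:
  "continuous_on (separated \<times> UNIV) (\<lambda>z. HU_contact ks knp l1 l2 l3 (fst z) (snd z) (snd z))"
proof -
  have "z \<in> separated \<times> UNIV \<Longrightarrow>
      vlen d12x d12z (fst z) \<noteq> 0 \<and> vlen d13x d13z (fst z) \<noteq> 0 \<and> vlen d23x d23z (fst z) \<noteq> 0" for z
    by (auto simp: separated_def vlen_def)
  then show ?thesis
    unfolding HU_contact_def spring_hessian_def vlen_def[abs_def]
    by (intro continuous_intros) (auto simp: vlen_def)
qed

lemma open_contact_set: "open contact_set"
proof -
  have eq: "contact_set = {y. 0 < (d12x y)\<^sup>2 + (d12z y)\<^sup>2} \<inter> {y. 0 < (d13x y)\<^sup>2 + (d13z y)\<^sup>2}
      \<inter> {y. 0 < (d23x y)\<^sup>2 + (d23z y)\<^sup>2} \<inter> {y. coord1 y < 0} \<inter> {y. coord3 y < 0} \<inter> {y. 0 < coord5 y}"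
    by (auto simp: contact_set_def separated_def)
  show ?thesis
    unfolding eq by (intro open_Int open_Collect_less continuous_intros continuous_on_id)
qed

lemma Uhat_eq_U_contact:
  assumes "y \<in> contact_set"
  shows "Uhat ks knp l1 l2 l3 y = U_contact ks knp l1 l2 l3 y"
proof -
  obtain z1 x2 z2 x3 z3 where y: "y = (z1, x2, z2, x3, z3)"
    by (cases y) auto
  have "z1 < 0" "z2 < 0" "z3 > 0"
    using assms by (auto simp: contact_set_def y)
  then show ?thesis
    unfolding y Uhat_def U_def sect_def U_contact_def vlen_def edge_defs chi_def
    by (simp add: dist_Pair_Pair dist_real_def power2_commute distrib_left)
qed

lemma contact_set_subset_rconfig_space: "contact_set \<subseteq> rconfig_space"
proof
  fix y :: rconfig
  assume y: "y \<in> contact_set"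
  obtain z1 x2 z2 x3 z3 where yy: "y = (z1, x2, z2, x3, z3)"
    by (cases y) auto
  show "y \<in> rconfig_space"
    using y unfolding yy rconfig_space_def sect_def config_space_def contact_set_def separated_def edge_defs
    by auto
qed

section \<open>The configuration determined by forces and compliances\<close>

text \<open>Given forces \<open>w = (f\<^sub>1, f\<^sub>2, f\<^sub>3, n\<^sub>1, n\<^sub>2)\<close> (the spring tensions and the ground
  reactions at \<open>q\<^sub>1, q\<^sub>2\<close>) and compliances \<open>e = (1/\<kappa>\<^sub>s, 1/\<kappa>\<^sub>n\<^sub>p)\<close>, spring \<open>k\<close> has length
  \<open>l\<^sub>k + f\<^sub>k/\<kappa>\<^sub>s\<close> and \<open>q\<^sub>1, q\<^sub>2\<close> sink to height \<open>-n\<^sub>i/\<kappa>\<^sub>n\<^sub>p\<close>; \<open>tri_config\<close> is the triangle with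
  these data, \<open>q\<^sub>2\<close> to the right of \<open>q\<^sub>1\<close> and \<open>q\<^sub>3\<close> above the line \<open>q\<^sub>1q\<^sub>2\<close>. The equilibrium
  of \<open>q\<^sub>3\<close> determines the stresses (tension per length) of springs 1 and 2 by Cramer's rule,
  the horizontal equilibrium of \<open>q\<^sub>2\<close> that of spring 3, and the vertical equilibria of \<open>q\<^sub>1, q\<^sub>2\<close>
  the reactions; \<open>force_map\<close> returns the forces so obtained.\<close>

context
  fixes l1 l2 l3 :: real
begin

definition side1 :: "rconfig \<Rightarrow> real \<times> real \<Rightarrow> real" where
  "side1 w e = l1 + fst e * coord1 w"
definition side2 :: "rconfig \<Rightarrow> real \<times> real \<Rightarrow> real" where
  "side2 w e = l2 + fst e * coord2 w"
definition side3 :: "rconfig \<Rightarrow> real \<times> real \<Rightarrow> real" where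
  "side3 w e = l3 + fst e * coord3 w"
definition z1_of :: "rconfig \<Rightarrow> real \<times> real \<Rightarrow> real" where
  "z1_of w e = - (snd e * coord4 w)"
definition z2_of :: "rconfig \<Rightarrow> real \<times> real \<Rightarrow> real" where
  "z2_of w e = - (snd e * coord5 w)"
definition x2_of :: "rconfig \<Rightarrow> real \<times> real \<Rightarrow> real" where
  "x2_of w e = sqrt ((side3 w e)\<^sup>2 - (z2_of w e - z1_of w e)\<^sup>2)"
definition foot_of :: "rconfig \<Rightarrow> real \<times> real \<Rightarrow> real" where
  "foot_of w e = ((side2 w e)\<^sup>2 + (side3 w e)\<^sup>2 - (side1 w e)\<^sup>2) / (2 * side3 w e)"
definition height_of :: "rconfig \<Rightarrow> real \<times> real \<Rightarrow> real" where
  "height_of w e = sqrt ((side2 w e)\<^sup>2 - (foot_of w e)\<^sup>2)"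
definition x3_of :: "rconfig \<Rightarrow> real \<times> real \<Rightarrow> real" where
  "x3_of w e = (foot_of w e * x2_of w e - height_of w e * (z2_of w e - z1_of w e)) / side3 w e"
definition z3_of :: "rconfig \<Rightarrow> real \<times> real \<Rightarrow> real" where
  "z3_of w e = z1_of w e + (foot_of w e * (z2_of w e - z1_of w e) + height_of w e * x2_of w e) / side3 w e"
definition tri_config :: "rconfig \<Rightarrow> real \<times> real \<Rightarrow> rconfig" where
  "tri_config w e = (z1_of w e, x2_of w e, z2_of w e, x3_of w e, z3_of w e)"
definition det_of :: "rconfig \<Rightarrow> real \<times> real \<Rightarrow> real" where
  "det_of w e = x3_of w e * (z3_of w e - z2_of w e) - (x3_of w e - x2_of w e) * (z3_of w e - z1_of w e)"
definition stress13 :: "rconfig \<Rightarrow> real \<times> real \<Rightarrow> real" where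
  "stress13 w e = (x3_of w e - x2_of w e) / det_of w e"
definition stress23 :: "rconfig \<Rightarrow> real \<times> real \<Rightarrow> real" where
  "stress23 w e = - x3_of w e / det_of w e"
definition stress12 :: "rconfig \<Rightarrow> real \<times> real \<Rightarrow> real" where
  "stress12 w e = stress23 w e * (x3_of w e - x2_of w e) / x2_of w e"
definition force_map :: "rconfig \<Rightarrow> real \<times> real \<Rightarrow> rconfig" where
  "force_map w e =
    (stress23 w e * side1 w e, stress13 w e * side2 w e, stress12 w e * side3 w e,
     1 - stress12 w e * (z2_of w e - z1_of w e) - stress13 w e * (z3_of w e - z1_of w e),
     1 + stress12 w e * (z2_of w e - z1_of w e) - stress23 w e * (z3_of w e - z2_of w e))"

definition admissible :: "rconfig \<Rightarrow> real \<times> real \<Rightarrow> bool" where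
  "admissible w e \<longleftrightarrow> 0 < side3 w e \<and> (z2_of w e - z1_of w e)\<^sup>2 < (side3 w e)\<^sup>2 \<and>
     side1 w e < side2 w e + side3 w e \<and> side2 w e < side1 w e + side3 w e \<and>
     side3 w e < side1 w e + side2 w e"

end

lemma heron_identity:
  fixes a b c :: real
  shows "4 * b\<^sup>2 * c\<^sup>2 - (b\<^sup>2 + c\<^sup>2 - a\<^sup>2)\<^sup>2 = (a + b + c) * (- a + b + c) * (a - b + c) * (a + b - c)"
  by algebra

lemma admissibleD:
  assumes "admissible l1 l2 l3 w e"
  shows "side1 l1 w e > 0" "side2 l2 w e > 0" "side3 l3 w e > 0" "x2_of l3 w e > 0"
    "height_of l1 l2 l3 w e > 0"
    "(x2_of l3 w e)\<^sup>2 + (z2_of w e - z1_of w e)\<^sup>2 = (side3 l3 w e)\<^sup>2"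
    "(height_of l1 l2 l3 w e)\<^sup>2 = (side2 l2 w e)\<^sup>2 - (foot_of l1 l2 l3 w e)\<^sup>2"
proof -
  note adm = assms[unfolded admissible_def]
  show sides: "side1 l1 w e > 0" "side2 l2 w e > 0" "side3 l3 w e > 0"
    using adm by linarith+
  show "x2_of l3 w e > 0" "(x2_of l3 w e)\<^sup>2 + (z2_of w e - z1_of w e)\<^sup>2 = (side3 l3 w e)\<^sup>2"
    using adm by (simp_all add: x2_of_def)
  define a b c where "a = side1 l1 w e" and "b = side2 l2 w e" and "c = side3 l3 w e"
  have "(a + b + c) * (- a + b + c) * (a - b + c) * (a + b - c) > 0"
    using adm sides unfolding a_def b_def c_def by simp
  then have "(4 * b\<^sup>2 * c\<^sup>2 - (b\<^sup>2 + c\<^sup>2 - a\<^sup>2)\<^sup>2) / (4 * c\<^sup>2) > 0"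
    using sides by (simp add: heron_identity c_def)
  also have "(4 * b\<^sup>2 * c\<^sup>2 - (b\<^sup>2 + c\<^sup>2 - a\<^sup>2)\<^sup>2) / (4 * c\<^sup>2) = b\<^sup>2 - (foot_of l1 l2 l3 w e)\<^sup>2"
    using sides unfolding foot_of_def a_def b_def c_def by (simp add: field_simps power2_eq_square)
  finally show "height_of l1 l2 l3 w e > 0"
    "(height_of l1 l2 l3 w e)\<^sup>2 = (side2 l2 w e)\<^sup>2 - (foot_of l1 l2 l3 w e)\<^sup>2"
    unfolding height_of_def b_def by simp_all
qed

lemma triangle_apex_distances:
  fixes X dz T Hh n1 n2 n3 X3 Z :: real
  assumes n3: "n3 > 0" and h1: "X\<^sup>2 + dz\<^sup>2 = n3\<^sup>2" and h2: "Hh\<^sup>2 = n2\<^sup>2 - T\<^sup>2"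
    and hT: "2 * n3 * T = n2\<^sup>2 + n3\<^sup>2 - n1\<^sup>2"
    and hX: "n3 * X3 = T * X - Hh * dz" and hZ: "n3 * Z = T * dz + Hh * X"
  shows "X3\<^sup>2 + Z\<^sup>2 = n2\<^sup>2" "(X3 - X)\<^sup>2 + (Z - dz)\<^sup>2 = n1\<^sup>2" "X3 * (Z - dz) - (X3 - X) * Z = Hh * n3"
proof -
  have "n3\<^sup>2 * (X3\<^sup>2 + Z\<^sup>2) = n3\<^sup>2 * n2\<^sup>2"
    using h1 h2 hX hZ by algebra
  then show "X3\<^sup>2 + Z\<^sup>2 = n2\<^sup>2"
    using n3 by simp
  have "n3\<^sup>2 * ((X3 - X)\<^sup>2 + (Z - dz)\<^sup>2) = n3\<^sup>2 * n1\<^sup>2"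
    using h1 h2 hX hZ hT by algebra
  then show "(X3 - X)\<^sup>2 + (Z - dz)\<^sup>2 = n1\<^sup>2"
    using n3 by simp
  have "n3 * (X3 * (Z - dz) - (X3 - X) * Z) = n3 * (Hh * n3)"
    using h1 h2 hX hZ hT by algebra
  then show "X3 * (Z - dz) - (X3 - X) * Z = Hh * n3"
    using n3 by simp
qed

lemma coord_edge_tri_config [simp]:
  "d12x (tri_config l1 l2 l3 w e) = x2_of l3 w e"
  "d12z (tri_config l1 l2 l3 w e) = z2_of w e - z1_of w e"
  "d13x (tri_config l1 l2 l3 w e) = x3_of l1 l2 l3 w e"
  "d13z (tri_config l1 l2 l3 w e) = z3_of l1 l2 l3 w e - z1_of w e"
  "d23x (tri_config l1 l2 l3 w e) = x3_of l1 l2 l3 w e - x2_of l3 w e"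
  "d23z (tri_config l1 l2 l3 w e) = z3_of l1 l2 l3 w e - z2_of w e"
  "coord1 (tri_config l1 l2 l3 w e) = z1_of w e"
  "coord3 (tri_config l1 l2 l3 w e) = z2_of w e"
  "coord5 (tri_config l1 l2 l3 w e) = z3_of l1 l2 l3 w e"
  by (simp_all add: tri_config_def edge_defs)

lemma tri_config_sides:
  assumes "admissible l1 l2 l3 w e"
  shows "vlen d12x d12z (tri_config l1 l2 l3 w e) = side3 l3 w e"
    "vlen d13x d13z (tri_config l1 l2 l3 w e) = side2 l2 w e"
    "vlen d23x d23z (tri_config l1 l2 l3 w e) = side1 l1 w e"
    and det_of_eq: "det_of l1 l2 l3 w e = height_of l1 l2 l3 w e * side3 l3 w e"
    and det_of_pos: "det_of l1 l2 l3 w e > 0"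
proof -
  note adm = admissibleD[OF assms]
  have "2 * side3 l3 w e * foot_of l1 l2 l3 w e
      = (side2 l2 w e)\<^sup>2 + (side3 l3 w e)\<^sup>2 - (side1 l1 w e)\<^sup>2"
    "side3 l3 w e * x3_of l1 l2 l3 w e
      = foot_of l1 l2 l3 w e * x2_of l3 w e - height_of l1 l2 l3 w e * (z2_of w e - z1_of w e)"
    "side3 l3 w e * (z3_of l1 l2 l3 w e - z1_of w e)
      = foot_of l1 l2 l3 w e * (z2_of w e - z1_of w e) + height_of l1 l2 l3 w e * x2_of l3 w e"
    using adm(3) by (simp_all add: foot_of_def x3_of_def z3_of_def)
  note apex = triangle_apex_distances[OF adm(3) adm(6) adm(7) this]
  show "vlen d12x d12z (tri_config l1 l2 l3 w e) = side3 l3 w e"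
    using adm(3,6) by (simp add: vlen_def)
  show "vlen d13x d13z (tri_config l1 l2 l3 w e) = side2 l2 w e"
    using adm(2) apex(1) by (simp add: vlen_def)
  show "vlen d23x d23z (tri_config l1 l2 l3 w e) = side1 l1 w e"
    using adm(1) apex(2) by (simp add: vlen_def)
  show "det_of l1 l2 l3 w e = height_of l1 l2 l3 w e * side3 l3 w e"
    using apex(3) by (simp add: det_of_def algebra_simps)
  then show "det_of l1 l2 l3 w e > 0"
    using adm by simp
qed

lemma cramer_solution_2x2:
  fixes P Q R S :: real
  assumes "P * S - R * Q \<noteq> 0"
  shows "(- P / (P * S - R * Q)) * R + (R / (P * S - R * Q)) * P = 0"
    "(- P / (P * S - R * Q)) * S + (R / (P * S - R * Q)) * Q = -1"
proof -
  define D where "D = P * S - R * Q"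
  have D: "D \<noteq> 0"
    using assms by (simp add: D_def)
  have "(- P / D) * R + (R / D) * P = 0"
    by (simp add: field_simps)
  moreover have "(- P / D) * S + (R / D) * Q = - D / D"
    using D by (simp add: divide_simps) (simp add: D_def)
  ultimately show "(- P / (P * S - R * Q)) * R + (R / (P * S - R * Q)) * P = 0"
    "(- P / (P * S - R * Q)) * S + (R / (P * S - R * Q)) * Q = -1"
    unfolding D_def[symmetric] using D by simp_all
qed

lemma stress_equilibrium:
  assumes adm: "admissible l1 l2 l3 w e"
  shows "stress12 l1 l2 l3 w e * x2_of l3 w e
      = stress23 l1 l2 l3 w e * (x3_of l1 l2 l3 w e - x2_of l3 w e)"
    "stress23 l1 l2 l3 w e * (x3_of l1 l2 l3 w e - x2_of l3 w e)
      + stress13 l1 l2 l3 w e * x3_of l1 l2 l3 w e = 0"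
    "stress23 l1 l2 l3 w e * (z3_of l1 l2 l3 w e - z2_of w e)
      + stress13 l1 l2 l3 w e * (z3_of l1 l2 l3 w e - z1_of w e) = -1"
proof -
  have "x2_of l3 w e \<noteq> 0"
    using admissibleD(4)[OF adm] by simp
  then show "stress12 l1 l2 l3 w e * x2_of l3 w e
      = stress23 l1 l2 l3 w e * (x3_of l1 l2 l3 w e - x2_of l3 w e)"
    by (simp add: stress12_def)
  have "det_of l1 l2 l3 w e \<noteq> 0"
    using tri_config_sides(5)[OF adm] by simp
  from cramer_solution_2x2[OF this[unfolded det_of_def]]
  show "stress23 l1 l2 l3 w e * (x3_of l1 l2 l3 w e - x2_of l3 w e)
      + stress13 l1 l2 l3 w e * x3_of l1 l2 l3 w e = 0"
    "stress23 l1 l2 l3 w e * (z3_of l1 l2 l3 w e - z2_of w e)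
      + stress13 l1 l2 l3 w e * (z3_of l1 l2 l3 w e - z1_of w e) = -1"
    unfolding stress23_def stress13_def det_of_def by simp_all
qed

lemma tri_config_critical:
  assumes adm: "admissible l1 l2 l3 w e" and fixed: "force_map l1 l2 l3 w e = w"
    and ks: "ks * fst e = 1" and knp: "knp * snd e = 1"
  shows "DU_contact ks knp l1 l2 l3 (tri_config l1 l2 l3 w e) h = 0"
proof -
  note adm' = admissibleD[OF adm] and sides = tri_config_sides[OF adm]
  define y where "y = tri_config l1 l2 l3 w e"
  have w: "coord1 w = stress23 l1 l2 l3 w e * side1 l1 w e"
    "coord2 w = stress13 l1 l2 l3 w e * side2 l2 w e"
    "coord3 w = stress12 l1 l2 l3 w e * side3 l3 w e"
    "coord4 w = 1 - stress12 l1 l2 l3 w e * (z2_of w e - z1_of w e)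
       - stress13 l1 l2 l3 w e * (z3_of l1 l2 l3 w e - z1_of w e)"
    "coord5 w = 1 + stress12 l1 l2 l3 w e * (z2_of w e - z1_of w e)
       - stress23 l1 l2 l3 w e * (z3_of l1 l2 l3 w e - z2_of w e)"
    by (subst (1) fixed[symmetric], simp add: force_map_def)+
  have "ks * (vlen d23x d23z y - l1) / vlen d23x d23z y = stress23 l1 l2 l3 w e"
    "ks * (vlen d13x d13z y - l2) / vlen d13x d13z y = stress13 l1 l2 l3 w e"
    "ks * (vlen d12x d12z y - l3) / vlen d12x d12z y = stress12 l1 l2 l3 w e"
    using sides adm' w ks unfolding y_def side1_def side2_def side3_def by (simp_all add: field_simps)
  then have springs:
    "spring_deriv ks l1 d23x d23z y h = stress23 l1 l2 l3 w e * (d23x y * d23x h + d23z y * d23z h)"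
    "spring_deriv ks l2 d13x d13z y h = stress13 l1 l2 l3 w e * (d13x y * d13x h + d13z y * d13z h)"
    "spring_deriv ks l3 d12x d12z y h = stress12 l1 l2 l3 w e * (d12x y * d12x h + d12z y * d12z h)"
    unfolding spring_deriv_def by simp_all
  have ground: "knp * z1_of w e = - coord4 w" "knp * z2_of w e = - coord5 w"
    using knp unfolding z1_of_def z2_of_def by (simp_all add: algebra_simps)
  have "DU_contact ks knp l1 l2 l3 y h
      = stress23 l1 l2 l3 w e * (d23x y * d23x h + d23z y * d23z h)
      + stress13 l1 l2 l3 w e * (d13x y * d13x h + d13z y * d13z h)
      + stress12 l1 l2 l3 w e * (d12x y * d12x h + d12z y * d12z h)
      + ((knp * z1_of w e) * coord1 h + (knp * z2_of w e) * coord3 h + (coord1 h + coord3 h + coord5 h))"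
    unfolding DU_contact_def springs by (simp add: y_def algebra_simps)
  also have "\<dots> = 0"
    unfolding ground w(4,5) y_def coord_edge_tri_config unfolding edge_defs
    using stress_equilibrium[OF adm] by algebra
  finally show ?thesis
    unfolding y_def .
qed

text \<open>The Hessian at \<open>tri_config l1 l2 l3 w e\<close> splits as \<open>\<kappa>\<^sub>s A + \<kappa>\<^sub>n\<^sub>p B + E\<close>, where the
  forms \<open>A, B, E\<close> below depend continuously on \<open>(w, e)\<close> alone.\<close>

definition spring_form :: "real \<Rightarrow> real \<Rightarrow> real \<Rightarrow> rconfig \<Rightarrow> real \<times> real \<Rightarrow> rconfig \<Rightarrow> real" where
  "spring_form l1 l2 l3 w e h =
     l1 / side1 l1 w e ^ 3 * ((x3_of l1 l2 l3 w e - x2_of l3 w e) * d23x h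
       + (z3_of l1 l2 l3 w e - z2_of w e) * d23z h)\<^sup>2
   + l2 / side2 l2 w e ^ 3 * (x3_of l1 l2 l3 w e * d13x h + (z3_of l1 l2 l3 w e - z1_of w e) * d13z h)\<^sup>2
   + l3 / side3 l3 w e ^ 3 * (x2_of l3 w e * d12x h + (z2_of w e - z1_of w e) * d12z h)\<^sup>2"

definition ground_form :: "rconfig \<Rightarrow> real" where
  "ground_form h = (coord1 h)\<^sup>2 + (coord3 h)\<^sup>2"

definition prestress_form :: "real \<Rightarrow> real \<Rightarrow> real \<Rightarrow> rconfig \<Rightarrow> real \<times> real \<Rightarrow> rconfig \<Rightarrow> real" where
  "prestress_form l1 l2 l3 w e h =
     coord1 w / side1 l1 w e * ((d23x h)\<^sup>2 + (d23z h)\<^sup>2) + coord2 w / side2 l2 w e * ((d13x h)\<^sup>2 + (d13z h)\<^sup>2)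
     + coord3 w / side3 l3 w e * ((d12x h)\<^sup>2 + (d12z h)\<^sup>2)"

lemma HU_contact_tri_config:
  assumes adm: "admissible l1 l2 l3 w e" and ks: "ks * fst e = 1"
  shows "HU_contact ks knp l1 l2 l3 (tri_config l1 l2 l3 w e) h h
    = ks * spring_form l1 l2 l3 w e h + knp * ground_form h + prestress_form l1 l2 l3 w e h"
proof -
  note adm' = admissibleD[OF adm] and sides = tri_config_sides[OF adm]
  have prestress: "ks * (1 - l1 / side1 l1 w e) = coord1 w / side1 l1 w e"
    "ks * (1 - l2 / side2 l2 w e) = coord2 w / side2 l2 w e"
    "ks * (1 - l3 / side3 l3 w e) = coord3 w / side3 l3 w e"
    using adm' ks by (simp_all add: side1_def side2_def side3_def field_simps)
  have spring: "spring_hessian k L a b y h h = k * (1 - L / vlen a b y) * ((a h)\<^sup>2 + (b h)\<^sup>2)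
      + k * (L / vlen a b y ^ 3 * (a y * a h + b y * b h)\<^sup>2)" for k L a b y
    unfolding spring_hessian_def by (cases "vlen a b y = 0") (simp_all add: field_simps power2_eq_square)
  show ?thesis
    unfolding HU_contact_def spring sides(1-3) prestress spring_form_def ground_form_def
      prestress_form_def coord_edge_tri_config
    by (simp add: algebra_simps power2_eq_square)
qed

lemma spring_form_nonneg:
  assumes "admissible l1 l2 l3 w e" "l1 \<ge> 0" "l2 \<ge> 0" "l3 \<ge> 0"
  shows "spring_form l1 l2 l3 w e h \<ge> 0"
  using admissibleD(1-3)[OF assms(1)] assms(2-4) unfolding spring_form_def
  by (intro add_nonneg_nonneg) simp_all

lemma tri_config_infinitesimally_rigid:
  assumes adm: "admissible l1 l2 l3 w e" and ground: "coord1 h = 0" "coord3 h = 0"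
    and spring1: "(x3_of l1 l2 l3 w e - x2_of l3 w e) * d23x h + (z3_of l1 l2 l3 w e - z2_of w e) * d23z h = 0"
    and spring2: "x3_of l1 l2 l3 w e * d13x h + (z3_of l1 l2 l3 w e - z1_of w e) * d13z h = 0"
    and spring3: "x2_of l3 w e * d12x h + (z2_of w e - z1_of w e) * d12z h = 0"
  shows "h = 0"
proof -
  define P Q R S where "P = x3_of l1 l2 l3 w e" and "Q = z3_of l1 l2 l3 w e - z1_of w e"
    and "R = x3_of l1 l2 l3 w e - x2_of l3 w e" and "S = z3_of l1 l2 l3 w e - z2_of w e"
  have det: "P * S - R * Q \<noteq> 0"
    using tri_config_sides(5)[OF adm] unfolding det_of_def P_def Q_def R_def S_def by simp
  have h2: "coord2 h = 0"
    using spring3 ground admissibleD(4)[OF adm] by (simp add: edge_defs)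
  have "R * coord4 h + S * coord5 h = 0" "P * coord4 h + Q * coord5 h = 0"
    using spring1 spring2 ground h2 by (simp_all add: edge_defs P_def Q_def R_def S_def)
  then have "coord4 h * (P * S - R * Q) = 0" "coord5 h * (P * S - R * Q) = 0"
    by algebra+
  with det ground h2 show "h = 0"
    by (cases h rule: prod_cases5) (simp add: zero_prod_def)
qed

lemma spring_ground_form_pos:
  assumes adm: "admissible l1 l2 l3 w e" and l: "l1 > 0" "l2 > 0" "l3 > 0" and h: "h \<noteq> 0"
  shows "spring_form l1 l2 l3 w e h + ground_form h > 0"
proof (rule ccontr)
  assume "\<not> ?thesis"
  note sides = admissibleD(1-3)[OF adm]
  define r1 r2 r3 where
    "r1 = (x3_of l1 l2 l3 w e - x2_of l3 w e) * d23x h + (z3_of l1 l2 l3 w e - z2_of w e) * d23z h"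
    and "r2 = x3_of l1 l2 l3 w e * d13x h + (z3_of l1 l2 l3 w e - z1_of w e) * d13z h"
    and "r3 = x2_of l3 w e * d12x h + (z2_of w e - z1_of w e) * d12z h"
  have terms: "l1 / side1 l1 w e ^ 3 * r1\<^sup>2 \<ge> 0" "l2 / side2 l2 w e ^ 3 * r2\<^sup>2 \<ge> 0"
    "l3 / side3 l3 w e ^ 3 * r3\<^sup>2 \<ge> 0"
    using sides l by simp_all
  have "spring_form l1 l2 l3 w e h + ground_form h
      = l1 / side1 l1 w e ^ 3 * r1\<^sup>2 + l2 / side2 l2 w e ^ 3 * r2\<^sup>2 + l3 / side3 l3 w e ^ 3 * r3\<^sup>2
      + ((coord1 h)\<^sup>2 + (coord3 h)\<^sup>2)"
    unfolding spring_form_def ground_form_def r1_def r2_def r3_def by simp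
  with \<open>\<not> ?thesis\<close> terms
  have "l1 / side1 l1 w e ^ 3 * r1\<^sup>2 = 0" "l2 / side2 l2 w e ^ 3 * r2\<^sup>2 = 0"
    "l3 / side3 l3 w e ^ 3 * r3\<^sup>2 = 0" "(coord1 h)\<^sup>2 + (coord3 h)\<^sup>2 = 0"
    by (smt (verit, best) zero_le_power2)+
  then have "r1 = 0" "r2 = 0" "r3 = 0" "coord1 h = 0" "coord3 h = 0"
    using sides l by (simp_all add: sum_power2_eq_zero_iff)
  then have "h = 0"
    unfolding r1_def r2_def r3_def by (intro tri_config_infinitesimally_rigid[OF adm])
  with h show False ..
qed

context
  fixes l1 l2 l3 :: real and S :: "'z::topological_space set"
    and W :: "'z \<Rightarrow> rconfig" and E :: "'z \<Rightarrow> real \<times> real"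
  assumes cW: "continuous_on S W" and cE: "continuous_on S E"
    and adm: "\<And>x. x \<in> S \<Longrightarrow> admissible l1 l2 l3 (W x) (E x)"
begin

lemma continuous_on_sides:
  "continuous_on S (\<lambda>x. side1 l1 (W x) (E x))" "continuous_on S (\<lambda>x. side2 l2 (W x) (E x))"
  "continuous_on S (\<lambda>x. side3 l3 (W x) (E x))"
  "continuous_on S (\<lambda>x. z1_of (W x) (E x))" "continuous_on S (\<lambda>x. z2_of (W x) (E x))"
  unfolding side1_def side2_def side3_def z1_of_def z2_of_def
  using cW cE by (auto intro!: continuous_intros)

lemma continuous_on_x2_of: "continuous_on S (\<lambda>x. x2_of l3 (W x) (E x))"
  unfolding x2_of_def by (intro continuous_intros continuous_on_sides)

lemma continuous_on_foot_of: "continuous_on S (\<lambda>x. foot_of l1 l2 l3 (W x) (E x))"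
  unfolding foot_of_def using admissibleD(3)[OF adm]
  by (intro continuous_intros continuous_on_sides) force+

lemma continuous_on_height_of: "continuous_on S (\<lambda>x. height_of l1 l2 l3 (W x) (E x))"
  unfolding height_of_def by (intro continuous_intros continuous_on_sides continuous_on_foot_of)

lemma continuous_on_apex:
  "continuous_on S (\<lambda>x. x3_of l1 l2 l3 (W x) (E x))"
  "continuous_on S (\<lambda>x. z3_of l1 l2 l3 (W x) (E x))"
  unfolding x3_of_def z3_of_def using admissibleD(3)[OF adm]
  by (intro continuous_intros continuous_on_sides continuous_on_foot_of continuous_on_height_of
      continuous_on_x2_of, force+)+

lemma continuous_on_det_of: "continuous_on S (\<lambda>x. det_of l1 l2 l3 (W x) (E x))"
  unfolding det_of_def by (intro continuous_intros continuous_on_sides continuous_on_apex continuous_on_x2_of)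

lemma continuous_on_stresses:
  "continuous_on S (\<lambda>x. stress13 l1 l2 l3 (W x) (E x))"
  "continuous_on S (\<lambda>x. stress23 l1 l2 l3 (W x) (E x))"
  "continuous_on S (\<lambda>x. stress12 l1 l2 l3 (W x) (E x))"
proof -
  have det: "x \<in> S \<Longrightarrow> det_of l1 l2 l3 (W x) (E x) \<noteq> 0" for x
    using tri_config_sides(5)[OF adm] by fastforce
  have x2: "x \<in> S \<Longrightarrow> x2_of l3 (W x) (E x) \<noteq> 0" for x
    using admissibleD(4)[OF adm] by fastforce
  show "continuous_on S (\<lambda>x. stress13 l1 l2 l3 (W x) (E x))"
    and s23: "continuous_on S (\<lambda>x. stress23 l1 l2 l3 (W x) (E x))"
    unfolding stress13_def stress23_def using det
    by (intro continuous_intros continuous_on_det_of continuous_on_apex continuous_on_x2_of; auto)+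
  show "continuous_on S (\<lambda>x. stress12 l1 l2 l3 (W x) (E x))"
    unfolding stress12_def using x2
    by (intro continuous_intros s23 continuous_on_apex continuous_on_x2_of) auto
qed

lemma continuous_on_force_map: "continuous_on S (\<lambda>x. force_map l1 l2 l3 (W x) (E x))"
  unfolding force_map_def
  by (intro continuous_intros continuous_on_stresses continuous_on_sides continuous_on_apex)

lemma continuous_on_forms:
  assumes cH: "continuous_on S Hh"
  shows "continuous_on S (\<lambda>x. spring_form l1 l2 l3 (W x) (E x) (Hh x) + ground_form (Hh x))"
    "continuous_on S (\<lambda>x. prestress_form l1 l2 l3 (W x) (E x) (Hh x))"
proof -
  have "x \<in> S \<Longrightarrow> side1 l1 (W x) (E x) \<noteq> 0 \<and> side2 l2 (W x) (E x) \<noteq> 0 \<and> side3 l3 (W x) (E x) \<noteq> 0"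
    for x using admissibleD(1-3)[OF adm] by fastforce
  then show "continuous_on S (\<lambda>x. spring_form l1 l2 l3 (W x) (E x) (Hh x) + ground_form (Hh x))"
    "continuous_on S (\<lambda>x. prestress_form l1 l2 l3 (W x) (E x) (Hh x))"
    unfolding spring_form_def ground_form_def prestress_form_def using cH cW
    by (intro continuous_intros continuous_on_sides continuous_on_apex continuous_on_x2_of, auto)+
qed

end

lemma hessian_forms_bounds:
  assumes D: "compact D" "D \<noteq> {}" and adm: "\<And>z. z \<in> D \<Longrightarrow> admissible l1 l2 l3 (fst z) (snd z)"
    and l: "l1 > 0" "l2 > 0" "l3 > 0"
  obtains c C where "c > 0"
    "\<And>w e u. (w, e) \<in> D \<Longrightarrow> norm u = 1 \<Longrightarrow> spring_form l1 l2 l3 w e u + ground_form u \<ge> c"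
    "\<And>w e u. (w, e) \<in> D \<Longrightarrow> norm u = 1 \<Longrightarrow> prestress_form l1 l2 l3 w e u \<ge> C"
proof -
  define K where "K = D \<times> sphere (0::rconfig) 1"
  have K: "compact K" "K \<noteq> {}"
    using D by (auto simp: K_def intro!: compact_Times)
  have adm_K: "z \<in> K \<Longrightarrow> admissible l1 l2 l3 (fst (fst z)) (snd (fst z))" for z
    using adm by (auto simp: K_def)
  note cont = continuous_on_forms[of K "\<lambda>z. fst (fst z)" "\<lambda>z. snd (fst z)" l1 l2 l3 snd,
      OF _ _ adm_K continuous_on_snd[OF continuous_on_id]]
  have "continuous_on K (\<lambda>z. spring_form l1 l2 l3 (fst (fst z)) (snd (fst z)) (snd z) + ground_form (snd z))"
    by (rule cont(1)) (intro continuous_intros)+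
  then obtain z1 where z1: "z1 \<in> K" "\<And>z. z \<in> K \<Longrightarrow>
      spring_form l1 l2 l3 (fst (fst z1)) (snd (fst z1)) (snd z1) + ground_form (snd z1)
      \<le> spring_form l1 l2 l3 (fst (fst z)) (snd (fst z)) (snd z) + ground_form (snd z)"
    using continuous_attains_inf[OF K] by blast
  have "continuous_on K (\<lambda>z. prestress_form l1 l2 l3 (fst (fst z)) (snd (fst z)) (snd z))"
    by (rule cont(2)) (intro continuous_intros)+
  then obtain z2 where z2: "\<And>z. z \<in> K \<Longrightarrow>
      prestress_form l1 l2 l3 (fst (fst z2)) (snd (fst z2)) (snd z2)
      \<le> prestress_form l1 l2 l3 (fst (fst z)) (snd (fst z)) (snd z)"
    using continuous_attains_inf[OF K] by blast
  show ?thesis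
  proof
    show "spring_form l1 l2 l3 (fst (fst z1)) (snd (fst z1)) (snd z1) + ground_form (snd z1) > 0"
      using z1(1) by (intro spring_ground_form_pos adm_K l) (auto simp: K_def)
  next
    fix w e u
    assume "(w, e) \<in> D" "norm (u :: rconfig) = 1"
    then have wu: "((w, e), u) \<in> K"
      by (simp add: K_def)
    show "spring_form l1 l2 l3 (fst (fst z1)) (snd (fst z1)) (snd z1) + ground_form (snd z1)
        \<le> spring_form l1 l2 l3 w e u + ground_form u"
      using z1(2)[OF wu] by simp
    show "prestress_form l1 l2 l3 (fst (fst z2)) (snd (fst z2)) (snd z2) \<le> prestress_form l1 l2 l3 w e u"
      using z2[OF wu] by simp
  qed
qed

lemma rigid_limit_simps:
  "side1 l1 w (0, 0) = l1" "side2 l2 w (0, 0) = l2" "side3 l3 w (0, 0) = l3"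
  "z1_of w (0, 0) = 0" "z2_of w (0, 0) = 0"
  by (simp_all add: side1_def side2_def side3_def z1_of_def z2_of_def)

lemma rigid_limit_independent:
  "force_map l1 l2 l3 w (0, 0) = force_map l1 l2 l3 0 (0, 0)"
  "z3_of l1 l2 l3 w (0, 0) = z3_of l1 l2 l3 0 (0, 0)"
  unfolding force_map_def stress12_def stress13_def stress23_def det_of_def z3_of_def x3_of_def
    x2_of_def height_of_def foot_of_def rigid_limit_simps
  by simp_all

lemma rigid_limit:
  assumes l: "l1 > 0" "l2 > 0" "l3 > 0" "l1 < l2 + l3" "l2 < l1 + l3" "l3 < l1 + l2"
  shows "admissible l1 l2 l3 w (0, 0)" "z3_of l1 l2 l3 w (0, 0) > 0"
    "coord4 (force_map l1 l2 l3 w (0, 0)) = 2 - foot_of l1 l2 l3 w (0, 0) / l3"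
    "coord5 (force_map l1 l2 l3 w (0, 0)) = 1 + foot_of l1 l2 l3 w (0, 0) / l3"
    "foot_of l1 l2 l3 w (0, 0) = (l2\<^sup>2 + l3\<^sup>2 - l1\<^sup>2) / (2 * l3)"
proof -
  show adm: "admissible l1 l2 l3 w (0, 0)"
    using l unfolding admissible_def rigid_limit_simps by simp
  note adm' = admissibleD[OF adm]
  have x2: "x2_of l3 w (0, 0) = l3"
    using l by (simp add: x2_of_def rigid_limit_simps)
  have x3: "x3_of l1 l2 l3 w (0, 0) = foot_of l1 l2 l3 w (0, 0)"
    using l unfolding x3_of_def rigid_limit_simps x2 by simp
  have z3: "z3_of l1 l2 l3 w (0, 0) = height_of l1 l2 l3 w (0, 0)"
    using l unfolding z3_of_def rigid_limit_simps x2 by simp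
  show "z3_of l1 l2 l3 w (0, 0) > 0"
    using z3 adm'(5) by simp
  have det: "det_of l1 l2 l3 w (0, 0) = height_of l1 l2 l3 w (0, 0) * l3"
    using tri_config_sides(4)[OF adm] by (simp add: rigid_limit_simps)
  show "coord4 (force_map l1 l2 l3 w (0, 0)) = 2 - foot_of l1 l2 l3 w (0, 0) / l3"
    "coord5 (force_map l1 l2 l3 w (0, 0)) = 1 + foot_of l1 l2 l3 w (0, 0) / l3"
    using adm'(5) l unfolding force_map_def stress13_def stress23_def det x3 z3 x2
    by (simp_all add: rigid_limit_simps field_simps)
  show "foot_of l1 l2 l3 w (0, 0) = (l2\<^sup>2 + l3\<^sup>2 - l1\<^sup>2) / (2 * l3)"
    by (simp add: foot_of_def rigid_limit_simps)
qed

lemma admissible_perturbation: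
  fixes M m \<eta> :: real
  assumes m: "4 * m \<le> l3" "4 * m \<le> l1 + l2 - l3" "4 * m \<le> l1 + l3 - l2" "4 * m \<le> l2 + l3 - l1"
    "m > 0" and w: "norm w \<le> M"
    and e: "0 \<le> fst e" "fst e \<le> \<eta>" "0 \<le> snd e" "snd e \<le> \<eta>" and \<eta>: "\<eta> * M \<le> m"
  shows "admissible l1 l2 l3 w e"
proof -
  have small: "\<bar>t * coord w\<bar> \<le> m" if "0 \<le> t" "t \<le> \<eta>" "\<bar>coord w\<bar> \<le> norm w" for t coord
  proof -
    have "\<bar>t * coord w\<bar> \<le> \<eta> * M"
      unfolding abs_mult using that w by (intro mult_mono) auto
    then show ?thesis
      using \<eta> by linarith
  qed
  have b: "\<bar>fst e * coord1 w\<bar> \<le> m" "\<bar>fst e * coord2 w\<bar> \<le> m" "\<bar>fst e * coord3 w\<bar> \<le> m"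
    "\<bar>snd e * coord4 w\<bar> \<le> m" "\<bar>snd e * coord5 w\<bar> \<le> m"
    using e by (intro small abs_coord_le_norm; simp)+
  have side3: "side3 l3 w e \<ge> l3 - m"
    using b(3) unfolding side3_def by linarith
  have "\<bar>z2_of w e - z1_of w e\<bar> < side3 l3 w e"
    using b(4,5) side3 m unfolding z1_of_def z2_of_def by linarith
  then have "\<bar>z2_of w e - z1_of w e\<bar>\<^sup>2 < (side3 l3 w e)\<^sup>2"
    by (intro power_strict_mono) auto
  then show ?thesis
    unfolding admissible_def using b side3 m unfolding side1_def side2_def side3_def
    by (auto simp: abs_le_iff)
qed

lemma tri_config_nondeg_local_min:
  assumes adm: "admissible l1 l2 l3 w e" and fixed: "force_map l1 l2 l3 w e = w"
    and ks: "ks * fst e = 1" and knp: "knp * snd e = 1" and e: "snd e > 0"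
    and reactions: "coord4 w > 0" "coord5 w > 0" and apex: "z3_of l1 l2 l3 w e > 0"
    and pd: "\<And>h. h \<noteq> 0 \<Longrightarrow> HU_contact ks knp l1 l2 l3 (tri_config l1 l2 l3 w e) h h > 0"
  shows "nondeg_local_min (Uhat ks knp l1 l2 l3) rconfig_space (tri_config l1 l2 l3 w e)"
proof (rule nondeg_local_minI[where W = contact_set and Df = "DU_contact ks knp l1 l2 l3"
      and H = "HU_contact ks knp l1 l2 l3"])
  note adm' = admissibleD[OF adm] and sides = tri_config_sides[OF adm]
  have "vlen d13x d13z (tri_config l1 l2 l3 w e) > 0" "vlen d23x d23z (tri_config l1 l2 l3 w e) > 0"
    using adm' sides by simp_all
  then show "tri_config l1 l2 l3 w e \<in> contact_set"
    using adm'(3,6) reactions e apex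
    by (simp add: contact_set_def separated_def vlen_def z1_of_def z2_of_def)
  show "open contact_set" "contact_set \<subseteq> rconfig_space"
    by (rule open_contact_set contact_set_subset_rconfig_space)+
  show "(Uhat ks knp l1 l2 l3 has_derivative DU_contact ks knp l1 l2 l3 y) (at y)"
    if "y \<in> contact_set" for y
    using that Uhat_eq_U_contact
    by (intro has_derivative_transform_within_open[OF U_contact_has_derivative open_contact_set])
       (auto simp: contact_set_def)
  show "((\<lambda>y. DU_contact ks knp l1 l2 l3 y h) has_derivative HU_contact ks knp l1 l2 l3 y h) (at y)"
    if "y \<in> contact_set" for y h
    using that by (intro DU_contact_has_derivative) (simp add: contact_set_def)
  show "DU_contact ks knp l1 l2 l3 (tri_config l1 l2 l3 w e) h = 0" for h
    by (rule tri_config_critical[OF adm fixed ks knp])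
  show "continuous_on (contact_set \<times> sphere 0 1) (\<lambda>z. HU_contact ks knp l1 l2 l3 (fst z) (snd z) (snd z))"
    by (rule continuous_on_subset[OF continuous_on_HU_contact]) (auto simp: contact_set_def)
qed (use HU_contact_scaleR pd in auto)

lemma HU_contact_tri_config_pos:
  assumes adm: "admissible l1 l2 l3 w e" and ks: "ks * fst e = 1" and l: "l1 > 0" "l2 > 0" "l3 > 0"
    and AB: "\<And>u. norm u = 1 \<Longrightarrow> spring_form l1 l2 l3 w e u + ground_form u \<ge> c"
    and E: "\<And>u. norm u = 1 \<Longrightarrow> prestress_form l1 l2 l3 w e u \<ge> C"
    and stiff: "K \<ge> 0" "K * c + C > 0" "ks \<ge> K" "knp \<ge> K"
    and h: "h \<noteq> 0"
  shows "HU_contact ks knp l1 l2 l3 (tri_config l1 l2 l3 w e) h h > 0"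
proof -
  define u where "u = h /\<^sub>R norm h"
  have u: "norm u = 1"
    using h by (simp add: u_def)
  have "ks * spring_form l1 l2 l3 w e u + knp * ground_form u
      \<ge> K * (spring_form l1 l2 l3 w e u + ground_form u)"
    using spring_form_nonneg[OF adm] l stiff by (simp add: ground_form_def distrib_left add_mono mult_right_mono)
  also have "K * (spring_form l1 l2 l3 w e u + ground_form u) \<ge> K * c"
    using AB[OF u] stiff(1) by (rule mult_left_mono)
  finally have "HU_contact ks knp l1 l2 l3 (tri_config l1 l2 l3 w e) u u > 0"
    unfolding HU_contact_tri_config[OF adm ks] using E[OF u] stiff(2) by linarith
  moreover have "HU_contact ks knp l1 l2 l3 (tri_config l1 l2 l3 w e) h h
      = (norm h)\<^sup>2 * HU_contact ks knp l1 l2 l3 (tri_config l1 l2 l3 w e) u u"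
    using HU_contact_scaleR[of ks knp l1 l2 l3 _ "norm h" u] h by (simp add: u_def)
  ultimately show ?thesis
    using h by simp
qed

lemma stiffness_threshold:
  fixes \<delta> c C :: real
  assumes \<delta>: "\<delta> > 0" and c: "c > 0"
  obtains K where "K > 0" "K * c + C > 0" "\<And>k. k \<ge> K \<Longrightarrow> k > 0 \<and> 1 / k \<le> \<delta>"
proof
  define K where "K = max (1 / \<delta>) ((\<bar>C\<bar> + 1) / c)"
  have K_ge: "K \<ge> 1 / \<delta>" "K \<ge> (\<bar>C\<bar> + 1) / c"
    by (simp_all add: K_def)
  show K: "K > 0"
    using K_ge(1) \<delta> by (auto intro: order.strict_trans2[of 0 "1 / \<delta>"])
  have "K * c \<ge> \<bar>C\<bar> + 1"
    using mult_right_mono[OF K_ge(2), of c] c by simp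
  then show "K * c + C > 0"
    by linarith
  fix k
  assume k: "k \<ge> K"
  have "1 \<le> K * \<delta>"
    using K_ge(1) \<delta> by (simp add: field_simps)
  also have "K * \<delta> \<le> k * \<delta>"
    using k \<delta> by (simp add: mult_right_mono)
  finally show "k > 0 \<and> 1 / k \<le> \<delta>"
    using k K by (auto simp: field_simps)
qed

section \<open>Existence when the base \<open>q\<^sub>1q\<^sub>2\<close> is the longest side\<close>

definition stiff_nondeg_min :: "real \<Rightarrow> real \<Rightarrow> real \<Rightarrow> bool" where
  "stiff_nondeg_min l1 l2 l3 \<longleftrightarrow> (\<exists>Ks Knp. \<forall>ks knp. ks \<ge> Ks \<and> knp \<ge> Knp \<longrightarrow>
     (\<exists>p. nondeg_local_min (Uhat ks knp l1 l2 l3) rconfig_space p))"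

locale longest_base_triangle =
  fixes l1 l2 l3 :: real
  assumes pos: "l1 > 0" "l2 > 0" "l3 > 0"
    and triangle: "l1 < l2 + l3" "l2 < l1 + l3" "l3 < l1 + l2"
    and longest: "l1 \<le> l3" "l2 \<le> l3"
begin

definition rigid_forces :: rconfig where
  "rigid_forces = force_map l1 l2 l3 0 (0, 0)"

lemma force_map_rigid: "force_map l1 l2 l3 w (0, 0) = rigid_forces"
  unfolding rigid_forces_def by (rule rigid_limit_independent)

text \<open>The foot of the altitude from \<open>q\<^sub>3\<close> lies between \<open>q\<^sub>1\<close> and \<open>q\<^sub>2\<close> because \<open>l\<^sub>3\<close> is the longest
  side, so both ground reactions of the rigid triangle are positive.\<close>

lemma rigid_reactions: "coord4 rigid_forces \<ge> 1" "coord5 rigid_forces \<ge> 1"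
proof -
  define t where "t = (l2\<^sup>2 + l3\<^sup>2 - l1\<^sup>2) / (2 * l3)"
  have "l1\<^sup>2 \<le> l3\<^sup>2" "l2\<^sup>2 \<le> l3\<^sup>2"
    using longest pos by (auto intro: power_mono)
  then have "0 \<le> l2\<^sup>2 + l3\<^sup>2 - l1\<^sup>2" "l2\<^sup>2 + l3\<^sup>2 - l1\<^sup>2 \<le> l3\<^sup>2 + l3\<^sup>2"
    using zero_le_power2[of l1] zero_le_power2[of l2] by linarith+
  moreover have "l3\<^sup>2 + l3\<^sup>2 = l3 * (2 * l3)"
    by (simp add: power2_eq_square)
  ultimately have "0 \<le> l2\<^sup>2 + l3\<^sup>2 - l1\<^sup>2" "l2\<^sup>2 + l3\<^sup>2 - l1\<^sup>2 \<le> l3 * (2 * l3)"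
    by simp_all
  then have "0 \<le> t / l3" "t / l3 \<le> 1"
    using pos(3) by (auto simp: t_def divide_le_eq)
  moreover have "coord4 rigid_forces = 2 - t / l3" "coord5 rigid_forces = 1 + t / l3"
    using rigid_limit(3-5)[OF pos triangle, of 0] unfolding rigid_forces_def t_def by simp_all
  ultimately show "coord4 rigid_forces \<ge> 1" "coord5 rigid_forces \<ge> 1"
    by linarith+
qed

lemma reactions_pos_near_rigid:
  assumes "w \<in> cball rigid_forces (1/2)"
  shows "coord4 w > 0" "coord5 w > 0"
proof -
  have "norm (w - rigid_forces) \<le> 1/2"
    using assms by (simp add: dist_norm norm_minus_commute)
  then have "\<bar>coord4 w - coord4 rigid_forces\<bar> \<le> 1/2" "\<bar>coord5 w - coord5 rigid_forces\<bar> \<le> 1/2"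
    using abs_coord_le_norm(4,5)[of "w - rigid_forces"] by (auto simp: coord_defs)
  then show "coord4 w > 0" "coord5 w > 0"
    using rigid_reactions by linarith+
qed

definition compliance_bound :: real where
  "compliance_bound =
     min (min l3 (l1 + l2 - l3)) (min (l1 + l3 - l2) (l2 + l3 - l1)) / (4 * (norm rigid_forces + 1))"

definition params :: "(rconfig \<times> (real \<times> real)) set" where
  "params = cball rigid_forces (1/2) \<times> cbox (0, 0) (compliance_bound, compliance_bound)"

lemma compliance_bound_pos: "compliance_bound > 0"
  unfolding compliance_bound_def using pos triangle
  by (intro divide_pos_pos) (auto intro: add_nonneg_pos)

lemma rigid_in_params: "(rigid_forces, (0, 0)) \<in> params"
  using compliance_bound_pos by (auto simp: params_def cbox_Pair_eq)

lemma compact_params: "compact params"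
  unfolding params_def by (intro compact_Times compact_cball compact_cbox)

lemma admissible_params:
  assumes "z \<in> params"
  shows "admissible l1 l2 l3 (fst z) (snd z)"
proof -
  define m where "m = min (min l3 (l1 + l2 - l3)) (min (l1 + l3 - l2) (l2 + l3 - l1)) / 4"
  have "norm rigid_forces + 1 \<noteq> 0"
    by (metis add_nonneg_pos norm_ge_zero zero_less_one less_irrefl)
  moreover have "compliance_bound = m / (norm rigid_forces + 1)"
    by (simp add: compliance_bound_def m_def divide_divide_eq_left)
  ultimately have "compliance_bound * (norm rigid_forces + 1) \<le> m"
    by simp
  moreover have "norm (fst z) \<le> norm rigid_forces + 1"
    using assms norm_triangle_sub[of "fst z" rigid_forces]
    by (auto simp: params_def dist_norm norm_minus_commute)
  moreover have "0 \<le> fst (snd z)" "fst (snd z) \<le> compliance_bound"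
    "0 \<le> snd (snd z)" "snd (snd z) \<le> compliance_bound"
    using assms by (auto simp: params_def cbox_Pair_eq mem_Times_iff)
  moreover have "4 * m \<le> l3" "4 * m \<le> l1 + l2 - l3" "4 * m \<le> l1 + l3 - l2" "4 * m \<le> l2 + l3 - l1"
    "m > 0"
    using pos triangle by (auto simp: m_def)
  ultimately show ?thesis
    by (intro admissible_perturbation[of m]) auto
qed

lemma near_rigid_limit:
  obtains \<delta> where "\<delta> > 0" "\<delta> \<le> compliance_bound"
    "\<And>w e. w \<in> cball rigid_forces (1/2) \<Longrightarrow> e \<in> cbox (0, 0) (\<delta>, \<delta>) \<Longrightarrow>
       dist rigid_forces (force_map l1 l2 l3 w e) < 1/2 \<and> z3_of l1 l2 l3 w e > 0"
proof -
  have fst_snd: "continuous_on params fst" "continuous_on params snd"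
    by (intro continuous_intros)+
  have "continuous_on params (\<lambda>z. force_map l1 l2 l3 (fst z) (snd z))"
    by (rule continuous_on_force_map[OF fst_snd admissible_params])
  from compact_uniformly_continuous[OF this compact_params]
  obtain \<delta>1 where \<delta>1: "\<delta>1 > 0" "\<And>z z'. z \<in> params \<Longrightarrow> z' \<in> params \<Longrightarrow> dist z' z < \<delta>1 \<Longrightarrow>
      dist (force_map l1 l2 l3 (fst z') (snd z')) (force_map l1 l2 l3 (fst z) (snd z)) < 1/2"
    by (rule uniformly_continuous_onE[of _ _ "1/2"]) auto
  define h0 where "h0 = z3_of l1 l2 l3 0 (0, 0)"
  have h0: "h0 > 0" "z3_of l1 l2 l3 w (0, 0) = h0" for w
    using rigid_limit(2)[OF pos triangle] rigid_limit_independent(2) by (auto simp: h0_def)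
  have "continuous_on params (\<lambda>z. z3_of l1 l2 l3 (fst z) (snd z))"
    by (rule continuous_on_apex(2)[OF fst_snd admissible_params])
  from compact_uniformly_continuous[OF this compact_params]
  obtain \<delta>2 where \<delta>2: "\<delta>2 > 0" "\<And>z z'. z \<in> params \<Longrightarrow> z' \<in> params \<Longrightarrow> dist z' z < \<delta>2 \<Longrightarrow>
      dist (z3_of l1 l2 l3 (fst z') (snd z')) (z3_of l1 l2 l3 (fst z) (snd z)) < h0"
    by (rule uniformly_continuous_onE[OF _ h0(1)]) auto
  define \<delta> where "\<delta> = min compliance_bound (min (\<delta>1 / 4) (\<delta>2 / 4))"
  show ?thesis
  proof
    show "\<delta> > 0" "\<delta> \<le> compliance_bound"
      using compliance_bound_pos \<delta>1 \<delta>2 by (auto simp: \<delta>_def)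
    fix w and e :: "real \<times> real"
    assume w: "w \<in> cball rigid_forces (1/2)" and "e \<in> cbox (0, 0) (\<delta>, \<delta>)"
    then have e: "0 \<le> fst e" "fst e \<le> \<delta>" "0 \<le> snd e" "snd e \<le> \<delta>"
      by (auto simp: cbox_Pair_eq mem_Times_iff)
    have in_params: "(w, e) \<in> params" "(w, (0, 0)) \<in> params"
      using w e compliance_bound_pos by (auto simp: params_def cbox_Pair_eq mem_Times_iff \<delta>_def)
    have "dist (w, e) (w, (0, 0)) = sqrt ((fst e)\<^sup>2 + (snd e)\<^sup>2)"
      by (cases e) (simp add: dist_Pair_Pair)
    also have "\<dots> \<le> \<bar>fst e\<bar> + \<bar>snd e\<bar>"
      by (rule sqrt_sum_squares_le_sum_abs)
    also have "\<dots> < min \<delta>1 \<delta>2"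
      using e \<delta>1 \<delta>2 by (auto simp: \<delta>_def)
    finally have near: "dist (w, e) (w, (0, 0)) < min \<delta>1 \<delta>2" .
    show "dist rigid_forces (force_map l1 l2 l3 w e) < 1/2 \<and> z3_of l1 l2 l3 w e > 0"
      using \<delta>1(2)[OF in_params(2,1)] \<delta>2(2)[OF in_params(2,1)] near h0
      by (auto simp: force_map_rigid dist_commute dist_real_def)
  qed
qed

lemma fixed_point:
  assumes e: "e \<in> cbox (0, 0) (compliance_bound, compliance_bound)"
    and maps: "\<And>w. w \<in> cball rigid_forces (1/2) \<Longrightarrow> force_map l1 l2 l3 w e \<in> cball rigid_forces (1/2)"
  obtains w where "w \<in> cball rigid_forces (1/2)" "force_map l1 l2 l3 w e = w"
proof -
  have cont: "continuous_on (cball rigid_forces (1/2)) (\<lambda>w. force_map l1 l2 l3 w e)"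
    using e by (intro continuous_on_force_map[OF continuous_on_id continuous_on_const]
        admissible_params[where z = "(_, e)", simplified]) (simp add: params_def)
  have self_map: "(\<lambda>w. force_map l1 l2 l3 w e) \<in> cball rigid_forces (1/2) \<rightarrow> cball rigid_forces (1/2)"
    using maps by (rule Pi_I)
  show ?thesis
    by (rule brouwer_ball[OF _ cont self_map that]) simp
qed

theorem stiff_nondeg_min: "stiff_nondeg_min l1 l2 l3"
proof -
  obtain \<delta> where \<delta>: "\<delta> > 0" "\<delta> \<le> compliance_bound"
    and near: "\<And>w e. w \<in> cball rigid_forces (1/2) \<Longrightarrow> e \<in> cbox (0, 0) (\<delta>, \<delta>) \<Longrightarrow>
       dist rigid_forces (force_map l1 l2 l3 w e) < 1/2 \<and> z3_of l1 l2 l3 w e > 0"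
    using near_rigid_limit by blast
  obtain c C where c: "c > 0"
    and AB: "\<And>w e u. (w, e) \<in> params \<Longrightarrow> norm u = 1 \<Longrightarrow> spring_form l1 l2 l3 w e u + ground_form u \<ge> c"
    and E: "\<And>w e u. (w, e) \<in> params \<Longrightarrow> norm u = 1 \<Longrightarrow> prestress_form l1 l2 l3 w e u \<ge> C"
    using hessian_forms_bounds[OF compact_params _ admissible_params pos] rigid_in_params by blast
  obtain K where K: "K > 0" "K * c + C > 0" and stiff_inv: "\<And>k. k \<ge> K \<Longrightarrow> k > 0 \<and> 1 / k \<le> \<delta>"
    using stiffness_threshold[OF \<delta>(1) c] by blast
  have "\<exists>p. nondeg_local_min (Uhat ks knp l1 l2 l3) rconfig_space p" if stiff: "ks \<ge> K" "knp \<ge> K" for ks knp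
  proof -
    define e where "e = (1 / ks, 1 / knp)"
    have stiff_pos: "ks > 0" "knp > 0" and e_small: "e \<in> cbox (0, 0) (\<delta>, \<delta>)"
      using stiff_inv[OF stiff(1)] stiff_inv[OF stiff(2)] by (auto simp: e_def cbox_Pair_eq)
    then have "e \<in> cbox (0, 0) (compliance_bound, compliance_bound)"
      using \<delta>(2) by (auto simp: cbox_Pair_eq mem_Times_iff)
    then obtain w where w: "w \<in> cball rigid_forces (1/2)" "force_map l1 l2 l3 w e = w"
      by (rule fixed_point) (use near[OF _ e_small] in \<open>auto simp: less_imp_le\<close>)
    have "(w, e) \<in> params"
      using w(1) e_small \<delta>(2) by (auto simp: params_def cbox_Pair_eq)
    note adm = admissible_params[OF this, simplified] and reactions = reactions_pos_near_rigid[OF w(1)]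
    have compliance: "ks * fst e = 1" "knp * snd e = 1" "snd e > 0"
      using stiff_pos by (auto simp: e_def)
    have "HU_contact ks knp l1 l2 l3 (tri_config l1 l2 l3 w e) h h > 0" if "h \<noteq> 0" for h
      using AB[OF \<open>(w, e) \<in> params\<close>] E[OF \<open>(w, e) \<in> params\<close>]
      by (rule HU_contact_tri_config_pos[OF adm compliance(1) pos _ _ less_imp_le[OF K(1)] K(2) stiff that])
    then have "nondeg_local_min (Uhat ks knp l1 l2 l3) rconfig_space (tri_config l1 l2 l3 w e)"
      using near[OF w(1) e_small]
      by (intro tri_config_nondeg_local_min[OF adm w(2) compliance reactions]) simp_all
    then show ?thesis ..
  qed
  then show ?thesis
    unfolding stiff_nondeg_min_def by blast
qed

end

section \<open>Relabelling the masses\<close>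

lemma nondeg_local_min_linear_change:
  fixes g f :: "'a::euclidean_space \<Rightarrow> real" and T Ti :: "'a \<Rightarrow> 'a"
  assumes nd: "nondeg_local_min g S P"
    and fg: "\<And>y. f (T y) = g y" and ST: "\<And>y. y \<in> S \<longleftrightarrow> T y \<in> S'"
    and lT: "bounded_linear T" and lTi: "bounded_linear Ti"
    and inv1: "\<And>y. Ti (T y) = y" and inv2: "\<And>x. T (Ti x) = x"
  shows "nondeg_local_min f S' (T P)"
proof -
  obtain e Df H where e: "e > 0" "ball P e \<subseteq> S" "\<forall>y\<in>ball P e. g P \<le> g y"
    and D: "\<forall>y\<in>ball P e. (g has_derivative Df y) (at y)"
    and HD: "\<forall>h. ((\<lambda>y. Df y h) has_derivative H h) (at P)"
    and pd: "\<forall>h. h \<noteq> 0 \<longrightarrow> H h h > 0"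
    using nd unfolding nondeg_local_min_def by blast
  obtain K where K: "K > 0" "\<And>x. norm (Ti x) \<le> norm x * K"
    using bounded_linear.pos_bounded[OF lTi] by blast
  have f: "f = (\<lambda>x. g (Ti x))"
    by (rule ext) (metis fg inv2)
  have dTi: "(Ti has_derivative Ti) F" for F
    using lTi by (rule bounded_linear_imp_has_derivative)
  have inb: "Ti x \<in> ball P e" if x: "x \<in> ball (T P) (e / K)" for x
  proof -
    have "Ti x - P = Ti (x - T P)"
      using inv1 linear_diff[OF bounded_linear.linear[OF lTi]] by metis
    then have "norm (Ti x - P) \<le> norm (x - T P) * K"
      using K(2) by metis
    also have "\<dots> < e"
      using x K(1) by (simp add: dist_norm norm_minus_commute pos_less_divide_eq)
    finally show ?thesis
      by (simp add: dist_norm norm_minus_commute)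
  qed
  show ?thesis
    unfolding nondeg_local_min_def
  proof (intro exI conjI)
    show "e / K > 0"
      using e K by simp
    show "ball (T P) (e / K) \<subseteq> S'"
      using inb e(2) ST inv2 by (metis subsetD subsetI)
    show "\<forall>y\<in>ball (T P) (e / K). f (T P) \<le> f y"
      using inb e(3) fg f inv1 by simp
    show "\<forall>y\<in>ball (T P) (e / K). (f has_derivative (\<lambda>h. Df (Ti y) (Ti h))) (at y)"
      unfolding f using inb D has_derivative_compose[OF dTi] by blast
    show "\<forall>h. ((\<lambda>y. Df (Ti y) (Ti h)) has_derivative (\<lambda>k. H (Ti h) (Ti k))) (at (T P))"
    proof
      fix h
      have "((\<lambda>y. Df y (Ti h)) has_derivative H (Ti h)) (at (Ti (T P)))"
        using HD inv1 by simp
      from has_derivative_compose[OF dTi this]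
      show "((\<lambda>y. Df (Ti y) (Ti h)) has_derivative (\<lambda>k. H (Ti h) (Ti k))) (at (T P))" .
    qed
    show "\<forall>h. h \<noteq> 0 \<longrightarrow> H (Ti h) (Ti h) > 0"
      using pd inv2 by (metis linear_0[OF bounded_linear.linear[OF lT]])
  qed
qed

definition cycle_masses :: "rconfig \<Rightarrow> rconfig" where
  "cycle_masses y = (case y of (z1, x2, z2, x3, z3) \<Rightarrow> (z3, - x3, z1, x2 - x3, z2))"

definition uncycle_masses :: "rconfig \<Rightarrow> rconfig" where
  "uncycle_masses y = (case y of (z1, x2, z2, x3, z3) \<Rightarrow> (z2, x3 - x2, z3, - x2, z1))"

lemma cycle_masses_inverse:
  "uncycle_masses (cycle_masses y) = y" "cycle_masses (uncycle_masses y) = y"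
  by (cases y; simp add: cycle_masses_def uncycle_masses_def)+

lemma bounded_linear_cycle_masses:
  "bounded_linear cycle_masses" "bounded_linear uncycle_masses"
proof -
  have eq: "cycle_masses = (\<lambda>y. (coord5 y, - coord4 y, coord1 y, coord2 y - coord4 y, coord3 y))"
    "uncycle_masses = (\<lambda>y. (coord3 y, coord4 y - coord2 y, coord5 y, - coord2 y, coord1 y))"
    by (rule ext, simp add: cycle_masses_def uncycle_masses_def coord_defs split: prod.splits)+
  show "bounded_linear cycle_masses" "bounded_linear uncycle_masses"
    unfolding eq
    by (intro bounded_linear_Pair bounded_linear_minus bounded_linear_sub bounded_linear_coord)+
qed

lemma Uhat_cycle_masses: "Uhat ks knp l1 l2 l3 (cycle_masses y) = Uhat ks knp l2 l3 l1 y"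
proof -
  obtain z1 x2 z2 x3 z3 where y: "y = (z1, x2, z2, x3, z3)"
    by (cases y) auto
  show ?thesis
    unfolding y Uhat_def U_def sect_def cycle_masses_def
    by (simp add: dist_Pair_Pair dist_real_def power2_commute algebra_simps)
qed

lemma rconfig_space_cycle_masses: "y \<in> rconfig_space \<longleftrightarrow> cycle_masses y \<in> rconfig_space"
proof -
  obtain z1 x2 z2 x3 z3 where y: "y = (z1, x2, z2, x3, z3)"
    by (cases y) auto
  show ?thesis
    unfolding y rconfig_space_def sect_def cycle_masses_def config_space_def by auto
qed

lemma stiff_nondeg_min_cycle:
  assumes "stiff_nondeg_min l2 l3 l1"
  shows "stiff_nondeg_min l1 l2 l3"
proof -
  obtain Ks Knp where K: "\<And>ks knp. ks \<ge> Ks \<and> knp \<ge> Knp \<Longrightarrow>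
      \<exists>p. nondeg_local_min (Uhat ks knp l2 l3 l1) rconfig_space p"
    using assms unfolding stiff_nondeg_min_def by blast
  have "\<exists>p. nondeg_local_min (Uhat ks knp l1 l2 l3) rconfig_space p"
    if stiff: "ks \<ge> Ks \<and> knp \<ge> Knp" for ks knp
  proof -
    obtain p where "nondeg_local_min (Uhat ks knp l2 l3 l1) rconfig_space p"
      using K[OF stiff] by blast
    then have "nondeg_local_min (Uhat ks knp l1 l2 l3) rconfig_space (cycle_masses p)"
      by (rule nondeg_local_min_linear_change[where f = "Uhat ks knp l1 l2 l3" and T = cycle_masses,
            OF _ Uhat_cycle_masses rconfig_space_cycle_masses bounded_linear_cycle_masses
            cycle_masses_inverse])
    then show ?thesis ..
  qed
  then show ?thesis
    unfolding stiff_nondeg_min_def by blast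
qed

theorem proposition6:
  fixes l1 l2 l3 :: real
  assumes "l1 > 0" and "l2 > 0" and "l3 > 0"
    and "l1 < l2 + l3" and "l2 < l1 + l3" and "l3 < l1 + l2"
  shows "\<exists>Ks Knp. \<forall>ks knp. ks \<ge> Ks \<and> knp \<ge> Knp \<longrightarrow>
           (\<exists>p. nondeg_local_min (Uhat ks knp l1 l2 l3) rconfig_space p)"
proof -
  consider "l1 \<le> l3" "l2 \<le> l3" | "l2 \<le> l1" "l3 \<le> l1" | "l1 \<le> l2" "l3 \<le> l2"
    by linarith
  then have "stiff_nondeg_min l1 l2 l3"
  proof cases
    case 1
    then interpret longest_base_triangle l1 l2 l3
      using assms by unfold_locales
    show ?thesis
      by (rule stiff_nondeg_min)
  next
    case 2
    then interpret longest_base_triangle l2 l3 l1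
      using assms by unfold_locales auto
    show ?thesis
      by (rule stiff_nondeg_min_cycle, rule stiff_nondeg_min)
  next
    case 3
    then interpret longest_base_triangle l3 l1 l2
      using assms by unfold_locales auto
    show ?thesis
      by (rule stiff_nondeg_min_cycle, rule stiff_nondeg_min_cycle, rule stiff_nondeg_min)
  qed
  then show ?thesis
    unfolding stiff_nondeg_min_def .
qed

end
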